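(* Let $Q\subseteq\mathbb{R}^2$ be a rational maximal lattice-free quadrilateral with vertices $a=(a_1,a_2)$, $b=(b_1,b_2)$, $c$, $d$ such that $(0,0)$ lies in the relative interior of the edge $[b,c]$, $(1,0)$ in the relative interior of $[b,d]$, $(0,1)$ in the relative interior of $[a,c]$, and $(1,1)$ in the relative interior of $[a,d]$; suppose $0<a_1\le b_1<1$, $1<a_2$, $b_2<0$, $-b_2\le a_2-1$, that the lattice width satisfies $w(Q)=a_2-b_2$, and in addition $a_1=b_1$. Let $w:=w(Q)$. Then for every $z>1$, $$P^{Q}(z)\ge\begin{cases}0 & \text{if } 1<z\le w,\\ \frac{(z-w)(2wz-w-z)}{w^2(z-1)^2} & \text{if } w<z\le\frac{w}{w-1},\\ \frac{(z-w)(2wz-w-z)+(w-1)^2(z-1)^2-1}{w^2(z-1)^2} & \text{if } \frac{w}{w-1}<z<+\infty.\end{cases}$$ Moreover, for every fixed $z>1$, $P^{Q}(z)$ tends to $1$ as $w$ tends to $1$ (over quadrilaterals satisfying these assumptions).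
   Context: A closed convex set $B\subseteq\mathbb{R}^2$ with non-empty interior is lattice-free if its interior contains no point of $\mathbb{Z}^2$, and maximal lattice-free if it is not properly contained in another lattice-free closed convex set. A split is a set $\{x\in\mathbb{R}^2: b\le a_1x_1+a_2x_2\le b+1\}$ with $a_1,a_2$ coprime integers and $b\in\mathbb{Z}$. For $f\in\mathbb{R}^2$ and rays $r^1,\dots,r^n\in\mathbb{R}^2\setminus\{0\}$ let $R_f^n:=\mathrm{conv}\{s\in\mathbb{R}^n_+: f+\sum_{j=1}^n r^js_j\in\mathbb{Z}^2\}$. For a lattice-free polyhedron $B$ with $f$ in its interior, $\psi^B$ is the Minkowski functional of $B-f$, $\psi^B(r)=\min\{\lambda>0:r\in\lambda(B-f)\}$ (taken as $0$ if $r\in\lambda(B-f)$ for all $\lambda>0$), and the cut associated with $B$ is $\sum_j\psi^B(r^j)s_j\ge1$. Let $\mathcal S$ be the set of all splits containing $f$ in their interior; for a set $\mathcal L$ of such polyhedra, $\mathcal L(R_f^n)$ is the set of $s\ge0$ satisfying the cuts associated with all members of $\mathcal L$. For polyhedra $P\subseteq Q'\subseteq\mathbb{R}^n_+$ with $P$ of covering type, $\alpha P:=\{x:\alpha x\in P\}$ ($\alpha P:=\mathbb{R}^n_+$ for $\alpha=+\infty$), and the strength $t(P,Q')$ is the minimum $\alpha\ge1$ with $Q'\subseteq\alpha P$. For a maximal lattice-free quadrilateral $Q$ with vertices $v^1,\dots,v^4$ and $f\in\mathrm{int}(Q)$, take $n=4$ and the corner rays $r^j=v^j-f$, and let $\mathcal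 F=\mathcal S\cup\{Q\}$. Define $$P^Q(z):=\frac{1}{\mathrm{Area}(Q)}\int_{f\in\mathrm{int}(Q)}\mathbf 1\{t(\mathcal F(R_f^4),\mathcal S(R_f^4))\le z\}\,df.$$ The lattice width is $w(Q):=\min_{u\in\mathbb{Z}^2\setminus\{0\}}\left(\max_{x\in Q}u^Tx-\min_{x\in Q}u^Tx\right)$. *)

theory Defs
  imports "HOL-Analysis.Analysis"
begin

definition lattice :: "(real \<times> real) set" where
  "lattice = {x. fst x \<in> \<int> \<and> snd x \<in> \<int>}"

definition lattice_free :: "(real \<times> real) set \<Rightarrow> bool" where
  "lattice_free B \<longleftrightarrow> closed B \<and> convex B \<and> interior B \<noteq> {} \<and> interior B \<inter> lattice = {}"

definition maximal_lattice_free :: "(real \<times> real) set \<Rightarrow> bool" where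
  "maximal_lattice_free B \<longleftrightarrow> lattice_free B \<and> \<not> (\<exists>B'. lattice_free B' \<and> B \<subset> B')"

definition is_split :: "(real \<times> real) set \<Rightarrow> bool" where
  "is_split S \<longleftrightarrow> (\<exists>a1 a2 b :: int. coprime a1 a2 \<and>
      S = {x. of_int b \<le> of_int a1 * fst x + of_int a2 * snd x \<and>
              of_int a1 * fst x + of_int a2 * snd x \<le> of_int b + 1})"

definition splits_at :: "real \<times> real \<Rightarrow> (real \<times> real) set set" where
  "splits_at f = {S. is_split S \<and> f \<in> interior S}"

definition nonneg_orthant :: "(real ^ 'n) set" where
  "nonneg_orthant = {s. \<forall>j. 0 \<le> s $ j}"

text \<open>Minkowski functional of B - f.\<close>
definition psi :: "(real \<times> real) set \<Rightarrow> real \<times> real \<Rightarrow> real \<times> real \<Rightarrow> real" where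
  "psi B f r = (if (\<forall>t>0. r \<in> (\<lambda>x. t *\<^sub>R (x - f)) ` B) then 0
                else Inf {t. t > 0 \<and> r \<in> (\<lambda>x. t *\<^sub>R (x - f)) ` B})"

definition cut_closure :: "(real \<times> real) set set \<Rightarrow> real \<times> real \<Rightarrow> ('n::finite \<Rightarrow> real \<times> real) \<Rightarrow> (real ^ 'n) set" where
  "cut_closure L f r = {s. (\<forall>j. 0 \<le> s $ j) \<and> (\<forall>B\<in>L. (\<Sum>j\<in>UNIV. psi B f (r j) * s $ j) \<ge> 1)}"

definition scale_set :: "ereal \<Rightarrow> (real ^ 'n) set \<Rightarrow> (real ^ 'n) set" where
  "scale_set \<alpha> P = (if \<alpha> = \<infinity> then nonneg_orthant else {x. real_of_ereal \<alpha> *\<^sub>R x \<in> P})"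

definition strength :: "(real ^ 'n) set \<Rightarrow> (real ^ 'n) set \<Rightarrow> ereal" where
  "strength P Q' = Inf {\<alpha>::ereal. 1 \<le> \<alpha> \<and> Q' \<subseteq> scale_set \<alpha> P}"

definition PQ :: "(4 \<Rightarrow> real \<times> real) \<Rightarrow> real \<Rightarrow> real" where
  "PQ v z = (let Q = convex hull (range v) in
     measure lebesgue {f \<in> interior Q.
        strength (cut_closure (splits_at f \<union> {Q}) f (\<lambda>j. v j - f))
                 (cut_closure (splits_at f) f (\<lambda>j. v j - f)) \<le> ereal z}
     / measure lebesgue Q)"

definition lattice_width :: "(real \<times> real) set \<Rightarrow> real" where
  "lattice_width Q = Inf {(SUP x\<in>Q. u \<bullet> x) - (INF x\<in>Q. u \<bullet> x) | u. u \<in> lattice \<and> u \<noteq> 0}"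

definition quad_vertices :: "real \<times> real \<Rightarrow> real \<times> real \<Rightarrow> real \<times> real \<Rightarrow> real \<times> real \<Rightarrow> 4 \<Rightarrow> real \<times> real" where
  "quad_vertices a b c d = (\<lambda>j. if j = 0 then a else if j = 1 then b else if j = 2 then c else d)"

definition cor1_hyp :: "real \<times> real \<Rightarrow> real \<times> real \<Rightarrow> real \<times> real \<Rightarrow> real \<times> real \<Rightarrow> bool" where
  "cor1_hyp a b c d \<longleftrightarrow> (let Q = convex hull {a, b, c, d} in
      (\<forall>v\<in>{a, b, c, d}. fst v \<in> \<rat> \<and> snd v \<in> \<rat>) \<and>
      card {a, b, c, d} = 4 \<and>
      {x. x extreme_point_of Q} = {a, b, c, d} \<and>
      maximal_lattice_free Q \<and>
      (0, 0) \<in> open_segment b c \<and> (1, 0) \<in> open_segment b d \<and>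
      (0, 1) \<in> open_segment a c \<and> (1, 1) \<in> open_segment a d \<and>
      0 < fst a \<and> fst a \<le> fst b \<and> fst b < 1 \<and> 1 < snd a \<and> snd b < 0 \<and>
      - snd b \<le> snd a - 1 \<and>
      lattice_width Q = snd a - snd b \<and>
      fst a = fst b)"

definition cor1_bound :: "real \<Rightarrow> real \<Rightarrow> real" where
  "cor1_bound w z = (if z \<le> w then 0
     else if z \<le> w / (w - 1) then (z - w) * (2 * w * z - w - z) / (w\<^sup>2 * (z - 1)\<^sup>2)
     else ((z - w) * (2 * w * z - w - z) + (w - 1)\<^sup>2 * (z - 1)\<^sup>2 - 1) / (w\<^sup>2 * (z - 1)\<^sup>2))"

end

theory Submission
  imports Defs
begin

text \<open>
Write \<open>a = (t, A)\<close> and \<open>b = (t, -B)\<close>. The four lattice points on the edges force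
\<open>c\<close> and \<open>d\<close> onto the line \<open>y = h\<close>, \<open>h = B / k\<close> with \<open>k = A + B - 1 = w - 1\<close>, which cuts \<open>Q\<close>
into two triangles of total area \<open>w\<^sup>2 / (2k)\<close>. All corner rays have \<open>\<psi>\<^sup>Q = 1\<close>, so the strength at
\<open>f\<close> is at most \<open>z\<close> iff every point of the split closure has coordinate sum at least \<open>1 / z\<close>;
this holds as soon as one split with \<open>f\<close> in its interior has gauge at most \<open>z\<close> on all corner rays.
The horizontal split \<open>0 \<le> y \<le> 1\<close> qualifies on the band \<open>B / (z - 1) \<le> y \<le> (z - A) / (z - 1)\<close>,
which misses two triangles of total area \<open>k z\<^sup>2 / (2 (z - 1)\<^sup>2)\<close>. When \<open>z > w / (w - 1)\<close>, the
vertical split \<open>0 \<le> x \<le> 1\<close> qualifies on a region outside the strip \<open>0 < y < 1\<close> of area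
\<open>k (1 - m\<^sup>2) / 2\<close>, \<open>m = 1 / (k (z - 1))\<close>.
\<close>

subsection \<open>Trapezoids\<close>

definition trapezoid :: "real \<Rightarrow> real \<Rightarrow> real \<Rightarrow> real \<Rightarrow> real \<Rightarrow> real \<Rightarrow> (real \<times> real) set" where
  "trapezoid y0 y1 l0 l1 r0 r1 =
     {p. y0 < snd p \<and> snd p < y1 \<and> l0 + l1 * snd p < fst p \<and> fst p < r0 + r1 * snd p}"

lemma open_trapezoid: "open (trapezoid y0 y1 l0 l1 r0 r1)"
  unfolding trapezoid_def by (intro open_Collect_conj open_Collect_less continuous_intros)

lemma trapezoid_in_sets_lebesgue: "trapezoid y0 y1 l0 l1 r0 r1 \<in> sets lebesgue"
  using open_trapezoid by (intro sets_completionI_sets) (auto intro: borel_open)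

lemma has_integral_affine_Ioo:
  fixes y0 y1 c0 c1 :: real
  assumes "y0 \<le> y1"
  shows "((\<lambda>y. c0 + c1 * y) has_integral (c0 * (y1 - y0) + c1 * (y1\<^sup>2 - y0\<^sup>2) / 2)) {y0<..<y1}"
proof -
  have "((\<lambda>y. c0 + c1 * y) has_integral
          ((c0 * y1 + c1 * y1\<^sup>2 / 2) - (c0 * y0 + c1 * y0\<^sup>2 / 2))) {y0..y1}"
    by (rule fundamental_theorem_of_calculus[OF assms])
       (auto intro!: derivative_eq_intros simp: has_real_derivative_iff_has_vector_derivative[symmetric])
  moreover have "(c0 * y1 + c1 * y1\<^sup>2 / 2) - (c0 * y0 + c1 * y0\<^sup>2 / 2)
                  = c0 * (y1 - y0) + c1 * (y1\<^sup>2 - y0\<^sup>2) / 2"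
    by (simp add: field_simps)
  ultimately show ?thesis
    by (subst has_integral_Icc_iff_Ioo[symmetric]) simp
qed

lemma measure_trapezoid:
  assumes "y0 \<le> y1" and width: "\<And>y. y0 \<le> y \<Longrightarrow> y \<le> y1 \<Longrightarrow> l0 + l1 * y \<le> r0 + r1 * y"
  shows "measure lebesgue (trapezoid y0 y1 l0 l1 r0 r1)
           = (r0 - l0) * (y1 - y0) + (r1 - l1) * (y1\<^sup>2 - y0\<^sup>2) / 2"
proof -
  define T where "T = trapezoid y0 y1 l0 l1 r0 r1"
  define I where "I = (r0 - l0) * (y1 - y0) + (r1 - l1) * (y1\<^sup>2 - y0\<^sup>2) / 2"
  have T_borel: "T \<in> sets borel"
    unfolding T_def using open_trapezoid by (rule borel_open)
  have slice: "(\<lambda>x. (x, y)) -` T = (if y0 < y \<and> y < y1 then {l0 + l1 * y <..< r0 + r1 * y} else {})" for y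
    by (auto simp: T_def trapezoid_def)
  have int: "((\<lambda>y. (r0 - l0) + (r1 - l1) * y) has_integral I) {y0<..<y1}"
    unfolding I_def by (rule has_integral_affine_Ioo[OF assms(1)])
  have "emeasure lborel T = emeasure (lborel \<Otimes>\<^sub>M lborel) T"
    by (simp add: lborel_prod)
  also have "\<dots> = (\<integral>\<^sup>+y. emeasure lborel ((\<lambda>x. (x, y)) -` T) \<partial>lborel)"
    by (rule lborel_pair.emeasure_pair_measure_alt2) (subst lborel_prod, simp add: T_borel)
  also have "\<dots> = (\<integral>\<^sup>+y. ennreal ((r0 - l0) + (r1 - l1) * y) * indicator {y0<..<y1} y \<partial>lborel)"
    by (rule nn_integral_cong) (use width in \<open>auto simp: slice indicator_def algebra_simps\<close>)
  also have "\<dots> = ennreal I"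
    by (rule nn_integral_has_integral_lebesgue'[OF _ int]) (use width in \<open>force simp: algebra_simps\<close>)
  finally have "emeasure lborel T = ennreal I" .
  moreover have "0 \<le> I"
    by (rule has_integral_nonneg[OF int]) (use width in \<open>force simp: algebra_simps\<close>)
  ultimately show ?thesis
    using T_borel by (simp add: measure_def T_def I_def)
qed

lemma fmeasurable_trapezoid:
  assumes "y0 \<le> y1"
  shows "trapezoid y0 y1 l0 l1 r0 r1 \<in> fmeasurable lebesgue"
proof -
  let ?lo = "min (l0 + l1 * y0) (l0 + l1 * y1)" and ?hi = "max (r0 + r1 * y0) (r0 + r1 * y1)"
  have "trapezoid y0 y1 l0 l1 r0 r1 \<subseteq> cbox (?lo, y0) (?hi, y1)"
  proof
    fix p assume p: "p \<in> trapezoid y0 y1 l0 l1 r0 r1"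
    obtain x y where p_eq: "p = (x, y)" by (cases p)
    have y: "y0 < y" "y < y1" and x: "l0 + l1 * y < x" "x < r0 + r1 * y"
      using p by (auto simp: trapezoid_def p_eq)
    have "?lo \<le> l0 + l1 * y"
      using y mult_left_mono[of y0 y l1] mult_left_mono_neg[of y y1 l1]
      by (cases "l1 \<ge> 0") (auto simp: min_def)
    moreover have "r0 + r1 * y \<le> ?hi"
      using y mult_left_mono[of y y1 r1] mult_left_mono_neg[of y0 y r1]
      by (cases "r1 \<ge> 0") (auto simp: max_def)
    ultimately show "p \<in> cbox (?lo, y0) (?hi, y1)"
      using x y by (auto simp: p_eq cbox_Pair_iff)
  qed
  then show ?thesis
    by (rule fmeasurableI2[OF lmeasurable_cbox _ trapezoid_in_sets_lebesgue])
qed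

lemma measure_Un_disjoint:
  assumes "S \<in> fmeasurable M" "T \<in> fmeasurable M" "S \<inter> T = {}"
  shows "measure M (S \<union> T) = measure M S + measure M T"
  using measure_Un3[OF assms(1,2)] assms(3) by simp

lemma horizontal_line_null: "{p :: real \<times> real. snd p = c} \<in> null_sets lebesgue"
proof -
  have "negligible {p :: real \<times> real. (0, 1) \<bullet> p = c}"
    by (rule negligible_hyperplane) (simp add: zero_prod_def)
  then show ?thesis by (simp add: inner_prod_def negligible_iff_null_sets)
qed

subsection \<open>Gauges of splits and the strength of the quadrilateral cut\<close>

lemma mem_scaled_image_iff:
  fixes B :: "(real \<times> real) set"
  assumes "t > 0"
  shows "r \<in> (\<lambda>x. t *\<^sub>R (x - f)) ` B \<longleftrightarrow> f + (1 / t) *\<^sub>R r \<in> B"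
proof
  assume "r \<in> (\<lambda>x. t *\<^sub>R (x - f)) ` B"
  then obtain x where "x \<in> B" "r = t *\<^sub>R (x - f)" by auto
  moreover have "f + (1 / t) *\<^sub>R (t *\<^sub>R (x - f)) = x" using assms by simp
  ultimately show "f + (1 / t) *\<^sub>R r \<in> B" by simp
next
  assume "f + (1 / t) *\<^sub>R r \<in> B"
  moreover have "r = t *\<^sub>R ((f + (1 / t) *\<^sub>R r) - f)" using assms by simp
  ultimately show "r \<in> (\<lambda>x. t *\<^sub>R (x - f)) ` B" by blast
qed

lemma psi_extreme_point:
  fixes K :: "(real \<times> real) set"
  assumes f: "f \<in> interior K" and v: "v extreme_point_of K"
  shows "psi K f (v - f) = 1"
proof -
  have vK: "v \<in> K" using v by (simp add: extreme_point_of_def)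
  have fK: "f \<in> K" using f interior_subset by blast
  have ge1: "1 \<le> t" if t: "t > 0" "v - f \<in> (\<lambda>x. t *\<^sub>R (x - f)) ` K" for t
  proof (rule ccontr)
    assume "\<not> 1 \<le> t"
    from t obtain x where xK: "x \<in> K" and "v - f = t *\<^sub>R (x - f)" by auto
    then have v_eq: "v = (1 - t) *\<^sub>R f + t *\<^sub>R x" by (simp add: algebra_simps)
    show False
    proof (cases "x = f")
      case True
      then show False
        using v_eq f extreme_point_not_in_interior[OF v] by (simp add: algebra_simps)
    next
      case False
      then have "v \<in> open_segment f x" using v_eq t(1) \<open>\<not> 1 \<le> t\<close> by (auto simp: in_segment)
      then show False using v fK xK by (auto simp: extreme_point_of_def)
    qed
  qed
  have not_all: "\<not> (\<forall>t>0. v - f \<in> (\<lambda>x. t *\<^sub>R (x - f)) ` K)"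
    using ge1[of "1/2"] by (auto intro!: exI[of _ "1/2::real"])
  have "Inf {t. t > 0 \<and> v - f \<in> (\<lambda>x. t *\<^sub>R (x - f)) ` K} = 1"
    by (rule cInf_eq_minimum) (use vK ge1 in auto)
  then show ?thesis unfolding psi_def if_not_P[OF not_all] .
qed

text \<open>If the cut of K reads \<open>\<Sum>s\<^sub>j \<ge> 1\<close>, then scaling L(R) by \<open>\<alpha>\<close> lands in the
  closure of \<open>L \<union> {K}\<close> exactly when \<open>\<alpha> \<ge> 1 / \<Sum>s\<^sub>j\<close> for every point \<open>s\<close> of L(R).\<close>
lemma strength_le_iff_sum_ge:
  fixes r :: "'n::finite \<Rightarrow> real \<times> real" and z :: real
  assumes z: "z > 1" and psi_K: "\<And>j. psi K f (r j) = 1"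
  shows "strength (cut_closure (L \<union> {K}) f r) (cut_closure L f r) \<le> ereal z \<longleftrightarrow>
         (\<forall>s\<in>cut_closure L f r. 1 / z \<le> (\<Sum>j\<in>UNIV. s $ j))"
proof -
  define P where "P = cut_closure (L \<union> {K}) f r"
  define R where "R = cut_closure L f r"
  define A where "A = {\<alpha>::ereal. 1 \<le> \<alpha> \<and> R \<subseteq> scale_set \<alpha> P}"
  have mem_P: "s \<in> P \<longleftrightarrow> s \<in> R \<and> 1 \<le> (\<Sum>j\<in>UNIV. s $ j)" for s
    by (auto simp: P_def R_def cut_closure_def psi_K)
  have scale_R: "c *\<^sub>R s \<in> R" if "s \<in> R" "1 \<le> c" for s c
  proof -
    have s0: "\<forall>j. 0 \<le> s $ j" and cuts: "\<forall>B\<in>L. 1 \<le> (\<Sum>j\<in>UNIV. psi B f (r j) * s $ j)"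
      using that(1) by (auto simp: R_def cut_closure_def)
    have "1 \<le> (\<Sum>j\<in>UNIV. psi B f (r j) * (c *\<^sub>R s) $ j)" if "B \<in> L" for B
    proof -
      have "1 \<le> (\<Sum>j\<in>UNIV. psi B f (r j) * s $ j)" using cuts that by blast
      also have "\<dots> \<le> c * (\<Sum>j\<in>UNIV. psi B f (r j) * s $ j)"
        using calculation \<open>1 \<le> c\<close> by (simp add: mult_le_cancel_right1 order.trans[OF _ mult_right_mono[of 1 c]])
      finally show ?thesis by (simp add: sum_distrib_left algebra_simps)
    qed
    then show ?thesis using s0 \<open>1 \<le> c\<close> by (auto simp: R_def cut_closure_def)
  qed
  show ?thesis
    unfolding P_def[symmetric] R_def[symmetric] strength_def A_def[symmetric]
  proof
    assume le: "Inf A \<le> ereal z"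
    show "\<forall>s\<in>R. 1 / z \<le> (\<Sum>j\<in>UNIV. s $ j)"
    proof (rule ccontr)
      assume "\<not> (\<forall>s\<in>R. 1 / z \<le> (\<Sum>j\<in>UNIV. s $ j))"
      then obtain s where sR: "s \<in> R" and small: "(\<Sum>j\<in>UNIV. s $ j) < 1 / z" by force
      define \<sigma> where "\<sigma> = (\<Sum>j\<in>UNIV. s $ j)"
      define c where "c = (if \<sigma> > 0 then ereal (1 / \<sigma>) else \<infinity>)"
      have "ereal z < c"
        using small z by (auto simp: c_def \<sigma>_def[symmetric] field_simps)
      moreover have "c \<le> \<alpha>" if "\<alpha> \<in> A" for \<alpha>
      proof (cases \<alpha>)
        case (real a)
        with that sR have "1 \<le> a" and "a *\<^sub>R s \<in> P"
          by (auto simp: A_def scale_set_def)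
        then have "1 \<le> a * \<sigma>" using mem_P by (simp add: \<sigma>_def sum_distrib_left)
        moreover have "\<sigma> > 0"
          using \<open>1 \<le> a * \<sigma>\<close> \<open>1 \<le> a\<close> by (smt (verit) mult_nonneg_nonpos)
        ultimately show ?thesis
          using real by (simp add: c_def field_simps)
      qed (use that in \<open>auto simp: A_def\<close>)
      then have "c \<le> Inf A" by (rule Inf_greatest)
      ultimately show False using le by simp
    qed
  next
    assume all: "\<forall>s\<in>R. 1 / z \<le> (\<Sum>j\<in>UNIV. s $ j)"
    have "z *\<^sub>R s \<in> P" if "s \<in> R" for s
    proof -
      have "1 \<le> z * (\<Sum>j\<in>UNIV. s $ j)"
        using mult_left_mono[OF bspec[OF all that], of z] z by simp
      then show ?thesis using mem_P scale_R[OF that] z by (simp add: sum_distrib_left)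
    qed
    then have "ereal z \<in> A" using z by (auto simp: A_def scale_set_def)
    then show "Inf A \<le> ereal z" by (rule Inf_lower)
  qed
qed

definition slab :: "real \<Rightarrow> real \<Rightarrow> real \<Rightarrow> (real \<times> real) set" where
  "slab p1 p2 c = {x. c \<le> p1 * fst x + p2 * snd x \<and> p1 * fst x + p2 * snd x \<le> c + 1}"

definition slab_gauge :: "real \<Rightarrow> real \<Rightarrow> real \<Rightarrow> real \<times> real \<Rightarrow> real \<times> real \<Rightarrow> real" where
  "slab_gauge p1 p2 c f r =
     max ((p1 * fst r + p2 * snd r) / (c + 1 - (p1 * fst f + p2 * snd f)))
         (- (p1 * fst r + p2 * snd r) / ((p1 * fst f + p2 * snd f) - c))"

lemma interior_slab:
  assumes "(p1, p2) \<noteq> (0, 0)"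
  shows "interior (slab p1 p2 c) = {x. c < p1 * fst x + p2 * snd x \<and> p1 * fst x + p2 * snd x < c + 1}"
proof -
  have slab_eq: "slab p1 p2 c = {x. (p1, p2) \<bullet> x \<ge> c} \<inter> {x. (p1, p2) \<bullet> x \<le> c + 1}"
    by (auto simp: slab_def inner_prod_def)
  have nz: "(p1, p2) \<noteq> (0::real \<times> real)" using assms by (simp add: zero_prod_def)
  show ?thesis
    unfolding slab_eq interior_Int interior_halfspace_ge[OF nz] interior_halfspace_le[OF nz]
    by (auto simp: inner_prod_def)
qed

lemma slab_gauge_nonneg:
  assumes "c < p1 * fst f + p2 * snd f" and "p1 * fst f + p2 * snd f < c + 1"
  shows "slab_gauge p1 p2 c f r \<ge> 0"
  using assms
  by (cases "p1 * fst r + p2 * snd r \<ge> 0")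
     (auto simp: slab_gauge_def le_max_iff_disj intro: divide_nonneg_pos divide_nonpos_pos)

lemma psi_slab:
  assumes lo: "c < p1 * fst f + p2 * snd f" and hi: "p1 * fst f + p2 * snd f < c + 1"
  shows "psi (slab p1 p2 c) f r = slab_gauge p1 p2 c f r"
proof -
  define p where "p = p1 * fst r + p2 * snd r"
  define L where "L = p1 * fst f + p2 * snd f - c"
  define H where "H = c + 1 - (p1 * fst f + p2 * snd f)"
  define M where "M = slab_gauge p1 p2 c f r"
  have "L > 0" "H > 0" using lo hi by (auto simp: L_def H_def)
  have M_eq: "M = max (p / H) (- p / L)" by (simp add: slab_gauge_def M_def p_def L_def H_def)
  have M_nonneg: "M \<ge> 0" unfolding M_def by (rule slab_gauge_nonneg[OF lo hi])
  have mem_iff: "r \<in> (\<lambda>x. t *\<^sub>R (x - f)) ` slab p1 p2 c \<longleftrightarrow> M \<le> t" if "t > 0" for t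
  proof -
    have "r \<in> (\<lambda>x. t *\<^sub>R (x - f)) ` slab p1 p2 c \<longleftrightarrow> f + (1 / t) *\<^sub>R r \<in> slab p1 p2 c"
      by (rule mem_scaled_image_iff[OF that])
    also have "\<dots> \<longleftrightarrow> -L \<le> p / t \<and> p / t \<le> H"
      by (simp add: slab_def L_def H_def p_def algebra_simps add_divide_distrib)
    also have "\<dots> \<longleftrightarrow> -p / L \<le> t \<and> p / H \<le> t"
      using that \<open>L > 0\<close> \<open>H > 0\<close> by (auto simp: field_simps)
    finally show ?thesis by (auto simp: M_eq)
  qed
  show ?thesis
  proof (cases "M > 0")
    case True
    have not_all: "\<not> (\<forall>t>0. r \<in> (\<lambda>x. t *\<^sub>R (x - f)) ` slab p1 p2 c)"
      using mem_iff[of "M/2"] True by (auto intro!: exI[of _ "M/2"])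
    have "{t. t > 0 \<and> r \<in> (\<lambda>x. t *\<^sub>R (x - f)) ` slab p1 p2 c} = {M..}"
      using mem_iff True by force
    then show ?thesis unfolding psi_def if_not_P[OF not_all] M_def by simp
  next
    case False
    then show ?thesis
      using mem_iff M_nonneg unfolding psi_def M_def by simp
  qed
qed

lemma slab_gauge_le:
  assumes "c < p1 * fst f + p2 * snd f" and "p1 * fst f + p2 * snd f < c + 1"
    and "p1 * fst r + p2 * snd r \<le> z * (c + 1 - (p1 * fst f + p2 * snd f))"
    and "- (p1 * fst r + p2 * snd r) \<le> z * ((p1 * fst f + p2 * snd f) - c)"
  shows "slab_gauge p1 p2 c f r \<le> z"
  unfolding slab_gauge_def using assms by (simp add: pos_divide_le_eq)

lemma is_split_iff_slab:
  "is_split S \<longleftrightarrow> (\<exists>a1 a2 b::int. coprime a1 a2 \<and> S = slab (of_int a1) (of_int a2) (of_int b))"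
  by (simp add: is_split_def slab_def)

definition split_cuts :: "real \<times> real \<Rightarrow> ('n::finite \<Rightarrow> real \<times> real) \<Rightarrow> ('n \<Rightarrow> real) \<Rightarrow> bool" where
  "split_cuts f r q \<longleftrightarrow> (\<forall>a1 a2 b::int. coprime a1 a2 \<longrightarrow>
     of_int b < of_int a1 * fst f + of_int a2 * snd f \<longrightarrow>
     of_int a1 * fst f + of_int a2 * snd f < of_int b + 1 \<longrightarrow>
     1 \<le> (\<Sum>j\<in>UNIV. slab_gauge (of_int a1) (of_int a2) (of_int b) f (r j) * q j))"

lemma mem_cut_closure_splits_iff:
  fixes r :: "'n::finite \<Rightarrow> real \<times> real"
  shows "s \<in> cut_closure (splits_at f) f r \<longleftrightarrow> (\<forall>j. 0 \<le> s $ j) \<and> split_cuts f r (\<lambda>j. s $ j)"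
proof -
  have split_iff: "S \<in> splits_at f \<longleftrightarrow> (\<exists>a1 a2 b::int. coprime a1 a2 \<and>
      of_int b < of_int a1 * fst f + of_int a2 * snd f \<and>
      of_int a1 * fst f + of_int a2 * snd f < of_int b + 1 \<and>
      S = slab (of_int a1) (of_int a2) (of_int b))" for S
  proof -
    have "interior (slab (of_int a1) (of_int a2) (of_int b)) =
            {x. of_int b < of_int a1 * fst x + of_int a2 * snd x \<and>
                of_int a1 * fst x + of_int a2 * snd x < of_int b + 1}"
      if "coprime a1 a2" for a1 a2 b :: int
      using that by (intro interior_slab) auto
    then show ?thesis
      unfolding splits_at_def is_split_iff_slab by (auto; blast)
  qed
  have "(\<forall>S\<in>splits_at f. 1 \<le> (\<Sum>j\<in>UNIV. psi S f (r j) * s $ j)) \<longleftrightarrow> split_cuts f r (\<lambda>j. s $ j)"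
  proof
    assume all: "\<forall>S\<in>splits_at f. 1 \<le> (\<Sum>j\<in>UNIV. psi S f (r j) * s $ j)"
    show "split_cuts f r (\<lambda>j. s $ j)"
      unfolding split_cuts_def
    proof (intro allI impI)
      fix a1 a2 b :: int
      assume "coprime a1 a2"
        and lo: "of_int b < of_int a1 * fst f + of_int a2 * snd f"
        and hi: "of_int a1 * fst f + of_int a2 * snd f < of_int b + 1"
      then have "slab (of_int a1) (of_int a2) (of_int b) \<in> splits_at f" using split_iff by blast
      then have "1 \<le> (\<Sum>j\<in>UNIV. psi (slab (of_int a1) (of_int a2) (of_int b)) f (r j) * s $ j)"
        using all by blast
      then show "1 \<le> (\<Sum>j\<in>UNIV. slab_gauge (of_int a1) (of_int a2) (of_int b) f (r j) * s $ j)"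
        by (simp only: psi_slab[OF lo hi])
    qed
  next
    assume cuts: "split_cuts f r (\<lambda>j. s $ j)"
    show "\<forall>S\<in>splits_at f. 1 \<le> (\<Sum>j\<in>UNIV. psi S f (r j) * s $ j)"
    proof
      fix S assume "S \<in> splits_at f"
      then obtain a1 a2 b :: int where "coprime a1 a2"
        and lo: "of_int b < of_int a1 * fst f + of_int a2 * snd f"
        and hi: "of_int a1 * fst f + of_int a2 * snd f < of_int b + 1"
        and S_eq: "S = slab (of_int a1) (of_int a2) (of_int b)"
        using split_iff by blast
      then show "1 \<le> (\<Sum>j\<in>UNIV. psi S f (r j) * s $ j)"
        using cuts unfolding split_cuts_def S_eq psi_slab[OF lo hi] by blast
    qed
  qed
  then show ?thesis by (simp add: cut_closure_def)
qed

lemma split_cuts_mono: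
  assumes "split_cuts f r q" and "\<And>j. 0 \<le> q j" and "\<And>j. q j \<le> q' j"
  shows "split_cuts f r q'"
  unfolding split_cuts_def
proof (intro allI impI)
  fix a1 a2 b :: int
  assume cop: "coprime a1 a2"
    and lo: "of_int b < of_int a1 * fst f + of_int a2 * snd f"
    and hi: "of_int a1 * fst f + of_int a2 * snd f < of_int b + 1"
  have "1 \<le> (\<Sum>j\<in>UNIV. slab_gauge (of_int a1) (of_int a2) (of_int b) f (r j) * q j)"
    using assms(1) cop lo hi unfolding split_cuts_def by blast
  also have "\<dots> \<le> (\<Sum>j\<in>UNIV. slab_gauge (of_int a1) (of_int a2) (of_int b) f (r j) * q' j)"
    by (intro sum_mono mult_left_mono assms(3) slab_gauge_nonneg[OF lo hi])
  finally show "1 \<le> (\<Sum>j\<in>UNIV. slab_gauge (of_int a1) (of_int a2) (of_int b) f (r j) * q' j)" .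
qed

lemma pred_split_cuts [measurable]:
  fixes v :: "'n::finite \<Rightarrow> real \<times> real"
  shows "Measurable.pred borel (\<lambda>f. split_cuts f (\<lambda>j. v j - f) q)"
proof -
  have [measurable]: "(fst :: real \<times> real \<Rightarrow> real) \<in> borel_measurable borel"
    "(snd :: real \<times> real \<Rightarrow> real) \<in> borel_measurable borel"
    by (intro borel_measurable_continuous_onI continuous_intros)+
  show ?thesis
    unfolding split_cuts_def slab_gauge_def fst_diff snd_diff by measurable
qed

lemma rational_upper_approximation:
  fixes s :: "'n::finite \<Rightarrow> real"
  assumes "(\<Sum>j\<in>UNIV. s j) < c"
  shows "\<exists>g::'n \<Rightarrow> rat. (\<forall>j. s j < of_rat (g j)) \<and> (\<Sum>j\<in>UNIV. of_rat (g j)) < c"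
proof -
  define \<delta> where "\<delta> = (c - (\<Sum>j\<in>UNIV. s j)) / real CARD('n)"
  have "\<delta> > 0" using assms by (simp add: \<delta>_def)
  then have "\<forall>j. \<exists>q::rat. s j < of_rat q \<and> of_rat q < s j + \<delta>"
    by (intro allI of_rat_dense) simp
  then obtain g where g: "\<And>j. s j < of_rat (g j) \<and> of_rat (g j) < s j + \<delta>" by metis
  have "(\<Sum>j\<in>UNIV. of_rat (g j)) < (\<Sum>j\<in>UNIV. s j + \<delta>)"
    by (rule sum_strict_mono) (use g in auto)
  also have "\<dots> = c" by (simp add: sum.distrib \<delta>_def)
  finally show ?thesis using g by blast
qed

text \<open>For \<open>K\<close> the convex hull of the corners \<open>v\<close>, this is the set of \<open>f\<close> at which the
  cut of \<open>K\<close> has strength at most \<open>z\<close> (by \<open>PQ_eq_measure_ratio\<close> below).\<close>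
definition strength_set :: "(real \<times> real) set \<Rightarrow> ('n::finite \<Rightarrow> real \<times> real) \<Rightarrow> real \<Rightarrow> (real \<times> real) set" where
  "strength_set K v z =
     {f \<in> interior K. \<forall>s \<in> cut_closure (splits_at f) f (\<lambda>j. v j - f). 1 / z \<le> (\<Sum>j\<in>UNIV. s $ j)}"

text \<open>Measurability: by monotonicity of the split cuts, the universal quantifier over
  the split closure can be restricted to rational points.\<close>
lemma strength_set_in_sets_lebesgue: "strength_set K v z \<in> sets lebesgue"
proof -
  define X where "X = {f. \<forall>g. \<not> ((\<forall>j. 0 \<le> g j) \<and> (\<Sum>j\<in>UNIV. real_of_rat (g j)) < 1 / z \<and>
                                split_cuts f (\<lambda>j. v j - f) (\<lambda>j. real_of_rat (g j)))}"
  have "Measurable.pred borel (\<lambda>f. \<forall>g. \<not> ((\<forall>j. 0 \<le> g j) \<and> (\<Sum>j\<in>UNIV. real_of_rat (g j)) < 1 / z \<and>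
                                split_cuts f (\<lambda>j. v j - f) (\<lambda>j. real_of_rat (g j))))"
    by measurable
  then have X_borel: "X \<in> sets borel" by (simp add: pred_def X_def)
  have "(\<forall>s \<in> cut_closure (splits_at f) f (\<lambda>j. v j - f). 1 / z \<le> (\<Sum>j\<in>UNIV. s $ j)) \<longleftrightarrow> f \<in> X" for f
  proof
    assume all: "\<forall>s \<in> cut_closure (splits_at f) f (\<lambda>j. v j - f). 1 / z \<le> (\<Sum>j\<in>UNIV. s $ j)"
    show "f \<in> X"
      unfolding X_def
    proof (intro CollectI allI notI)
      fix g :: "'a \<Rightarrow> rat"
      assume g: "(\<forall>j. 0 \<le> g j) \<and> (\<Sum>j\<in>UNIV. real_of_rat (g j)) < 1 / z \<and>
                 split_cuts f (\<lambda>j. v j - f) (\<lambda>j. real_of_rat (g j))"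
      then have "(\<chi> j. real_of_rat (g j)) \<in> cut_closure (splits_at f) f (\<lambda>j. v j - f)"
        by (simp add: mem_cut_closure_splits_iff)
      then show False using all g by fastforce
    qed
  next
    assume "f \<in> X"
    show "\<forall>s \<in> cut_closure (splits_at f) f (\<lambda>j. v j - f). 1 / z \<le> (\<Sum>j\<in>UNIV. s $ j)"
    proof (rule ccontr)
      assume "\<not> ?thesis"
      then obtain s where s: "s \<in> cut_closure (splits_at f) f (\<lambda>j. v j - f)"
        and small: "(\<Sum>j\<in>UNIV. s $ j) < 1 / z" by force
      obtain g where g: "\<And>j. s $ j < of_rat (g j)" and "(\<Sum>j\<in>UNIV. real_of_rat (g j)) < 1 / z"
        using rational_upper_approximation[of "\<lambda>j. s $ j"] small by blast
      moreover have "\<forall>j. 0 \<le> g j" and "split_cuts f (\<lambda>j. v j - f) (\<lambda>j. real_of_rat (g j))"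
      proof -
        have s0: "\<forall>j. 0 \<le> s $ j" and cuts: "split_cuts f (\<lambda>j. v j - f) (\<lambda>j. s $ j)"
          using s unfolding mem_cut_closure_splits_iff by auto
        show "\<forall>j. 0 \<le> g j"
          using s0 g by (metis less_imp_le order.trans zero_le_of_rat_iff)
        show "split_cuts f (\<lambda>j. v j - f) (\<lambda>j. real_of_rat (g j))"
          by (rule split_cuts_mono[OF cuts]) (use s0 g in \<open>auto intro: less_imp_le\<close>)
      qed
      ultimately show False using \<open>f \<in> X\<close> unfolding X_def by blast
    qed
  qed
  then have "strength_set K v z = interior K \<inter> X" by (auto simp: strength_set_def)
  then show ?thesis using X_borel by (auto intro: borel_open)
qed

lemma mem_strength_set_if_slab_gauge_le:
  assumes f: "f \<in> interior K" and z: "z > 0" and cop: "coprime m n"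
    and lo: "of_int c < of_int m * fst f + of_int n * snd f"
    and hi: "of_int m * fst f + of_int n * snd f < of_int c + 1"
    and gauge: "\<And>j. slab_gauge (of_int m) (of_int n) (of_int c) f (v j - f) \<le> z"
  shows "f \<in> strength_set K v z"
  unfolding strength_set_def
proof (intro CollectI conjI f ballI)
  fix s assume "s \<in> cut_closure (splits_at f) f (\<lambda>j. v j - f)"
  then have s0: "\<forall>j. 0 \<le> s $ j"
    and cut: "1 \<le> (\<Sum>j\<in>UNIV. slab_gauge (of_int m) (of_int n) (of_int c) f (v j - f) * s $ j)"
    using cop lo hi unfolding mem_cut_closure_splits_iff split_cuts_def by blast+
  note cut
  also have "\<dots> \<le> (\<Sum>j\<in>UNIV. z * s $ j)"
    by (intro sum_mono mult_right_mono gauge) (use s0 in auto)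
  finally show "1 / z \<le> (\<Sum>j\<in>UNIV. s $ j)" using z by (simp add: sum_distrib_left field_simps)
qed

lemma PQ_eq_measure_ratio:
  assumes extreme: "\<And>j. v j extreme_point_of convex hull (range v)" and z: "z > 1"
  shows "PQ v z = measure lebesgue (strength_set (convex hull (range v)) v z)
                  / measure lebesgue (convex hull (range v))"
proof -
  let ?K = "convex hull (range v)"
  have "strength (cut_closure (splits_at f \<union> {?K}) f (\<lambda>j. v j - f))
          (cut_closure (splits_at f) f (\<lambda>j. v j - f)) \<le> ereal z
        \<longleftrightarrow> (\<forall>s\<in>cut_closure (splits_at f) f (\<lambda>j. v j - f). 1 / z \<le> (\<Sum>j\<in>UNIV. s $ j))"
    if "f \<in> interior ?K" for f
    using strength_le_iff_sum_ge[OF z psi_extreme_point[OF that extreme]] .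
  then have "{f \<in> interior ?K. strength (cut_closure (splits_at f \<union> {?K}) f (\<lambda>j. v j - f))
                 (cut_closure (splits_at f) f (\<lambda>j. v j - f)) \<le> ereal z} = strength_set ?K v z"
    unfolding strength_set_def by blast
  then show ?thesis
    unfolding PQ_def Let_def by simp
qed

subsection \<open>Elementary algebra and geometry of the quadrilateral\<close>

lemma barycentric_identities_upper:
  fixes t m k x y D :: real
  assumes "D \<noteq> 0" and "k \<noteq> 0" and D_eq: "D = m * (k + 1)"
  defines "\<alpha> \<equiv> (k * y - k + m) / D" and "\<beta> \<equiv> k * (m + 1 - t + (t - 1) * y - m * x) / D"
    and "\<gamma> \<equiv> k * (m * x + t - t * y) / D"
  shows "\<alpha> + \<beta> + \<gamma> = 1"
    and "\<alpha> * t + \<beta> * (-t / k) + \<gamma> * ((k + 1 - t) / k) = x"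
    and "\<alpha> * (m + 1) + \<beta> * ((k - m) / k) + \<gamma> * ((k - m) / k) = y"
  using assms(1,2) unfolding \<alpha>_def \<beta>_def \<gamma>_def
  by (simp_all add: field_simps) (simp_all add: D_eq algebra_simps)

lemma barycentric_identities_lower:
  fixes t B k x y D :: real
  assumes "D \<noteq> 0" and "k \<noteq> 0" and D_eq: "D = B * (k + 1)"
  defines "\<alpha> \<equiv> (B - k * y) / D" and "\<beta> \<equiv> k * (B + (1 - t) * y - B * x) / D"
    and "\<gamma> \<equiv> k * (B * x + t * y) / D"
  shows "\<alpha> + \<beta> + \<gamma> = 1"
    and "\<alpha> * t + \<beta> * (-t / k) + \<gamma> * ((k + 1 - t) / k) = x"
    and "\<alpha> * (-B) + \<beta> * (B / k) + \<gamma> * (B / k) = y"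
  using assms(1,2) unfolding \<alpha>_def \<beta>_def \<gamma>_def
  by (simp_all add: field_simps) (simp_all add: D_eq algebra_simps)

lemma cor1_bound_middle_eq:
  fixes k c w :: real
  assumes "k > 0" "c > 0" "w = k + 1"
  shows "(w\<^sup>2 / (2 * k) - k * (c + 1)\<^sup>2 / (2 * c\<^sup>2)) / (w\<^sup>2 / (2 * k))
           = ((c + 1) - w) * (2 * w * (c + 1) - w - (c + 1)) / (w\<^sup>2 * c\<^sup>2)"
proof -
  have "w \<noteq> 0" using assms by simp
  then show ?thesis
    using assms(1,2) by (simp add: field_simps power2_eq_square) (simp add: assms(3) algebra_simps)
qed

lemma cor1_bound_last_eq:
  fixes k c w :: real
  assumes "k > 0" "c > 0" "w = k + 1"
  shows "(w\<^sup>2 / (2 * k) - k * (c + 1)\<^sup>2 / (2 * c\<^sup>2) + k * (1 - (1 / (k * c))\<^sup>2) / 2) / (w\<^sup>2 / (2 * k))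
           = (((c + 1) - w) * (2 * w * (c + 1) - w - (c + 1)) + (w - 1)\<^sup>2 * c\<^sup>2 - 1) / (w\<^sup>2 * c\<^sup>2)"
proof -
  have "w \<noteq> 0" using assms by simp
  then show ?thesis
    using assms(1,2) by (simp add: field_simps power2_eq_square) (simp add: assms(3) algebra_simps)
qed

lemma vertex_c_eq:
  fixes t A B :: real and c :: "real \<times> real"
  assumes "0 < t" "1 < A" "0 < B"
    and bc: "(0, 0) \<in> open_segment (t, -B) c" and ac: "(0, 1) \<in> open_segment (t, A) c"
  shows "c = (-t / (A + B - 1), B / (A + B - 1))"
proof -
  obtain c1 c2 where c_eq: "c = (c1, c2)" by (cases c)
  from bc obtain u where "(0::real, 0::real) = (1 - u) *\<^sub>R (t, -B) + u *\<^sub>R c"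
    unfolding in_segment by blast
  then have u1: "u * c1 = -((1 - u) * t)" and u2: "u * c2 = (1 - u) * B"
    by (auto simp: c_eq algebra_simps)
  from ac obtain v where "(0::real, 1::real) = (1 - v) *\<^sub>R (t, A) + v *\<^sub>R c"
    unfolding in_segment by blast
  then have v1: "v * c1 = -((1 - v) * t)" and v2: "1 = (1 - v) * A + v * c2"
    by (auto simp: c_eq algebra_simps)
  have "v * (u * c1) = u * (v * c1)" by simp
  then have "v * ((1 - u) * t) = u * ((1 - v) * t)" using u1 v1 by simp
  then have "(v - u) * t = 0" by (simp add: algebra_simps)
  then have "v = u" using \<open>0 < t\<close> by simp
  then have "1 = (1 - u) * A + (1 - u) * B" using v2 u2 by simp
  then have sum: "(1 - u) * (A + B) = 1" by (simp add: algebra_simps)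
  have "(1 - u) * (A + B) = (A + B) - u * (A + B)" by (simp add: algebra_simps)
  then have u_eq: "u * (A + B) = A + B - 1" using sum by linarith
  have "A + B - 1 \<noteq> 0" using assms by simp
  moreover have "(A + B - 1) * c2 = (1 - u) * (A + B) * B"
    using u2 u_eq by (metis mult.assoc mult.commute)
  then have "(A + B - 1) * c2 = B" using sum by simp
  moreover have "(A + B - 1) * c1 = -((1 - u) * (A + B) * t)"
    using u1 u_eq by (metis mult.assoc mult.commute mult_minus_right)
  then have "(A + B - 1) * c1 = -t" using sum by simp
  ultimately show ?thesis by (simp add: c_eq field_simps)
qed

lemma vertex_d_eq:
  fixes t A B :: real and d :: "real \<times> real"
  assumes "t < 1" "1 < A" "0 < B"
    and bd: "(1, 0) \<in> open_segment (t, -B) d" and ad: "(1, 1) \<in> open_segment (t, A) d"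
  shows "d = ((A + B - t) / (A + B - 1), B / (A + B - 1))"
proof -
  obtain d1 d2 where d_eq: "d = (d1, d2)" by (cases d)
  from bd obtain u where "(1::real, 0::real) = (1 - u) *\<^sub>R (t, -B) + u *\<^sub>R d"
    unfolding in_segment by blast
  then have u1: "u * (d1 - t) = 1 - t" and u2: "u * d2 = (1 - u) * B"
    by (auto simp: d_eq algebra_simps)
  from ad obtain v where "(1::real, 1::real) = (1 - v) *\<^sub>R (t, A) + v *\<^sub>R d"
    unfolding in_segment by blast
  then have v1: "v * (d1 - t) = 1 - t" and v2: "1 = (1 - v) * A + v * d2"
    by (auto simp: d_eq algebra_simps)
  have "d1 - t \<noteq> 0" using u1 \<open>t < 1\<close> by auto
  have "v * (d1 - t) = u * (d1 - t)" using u1 v1 by simp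
  then have "v = u" using \<open>d1 - t \<noteq> 0\<close> by simp
  then have "1 = (1 - u) * A + (1 - u) * B" using v2 u2 by simp
  then have sum: "(1 - u) * (A + B) = 1" by (simp add: algebra_simps)
  have "(1 - u) * (A + B) = (A + B) - u * (A + B)" by (simp add: algebra_simps)
  then have u_eq: "u * (A + B) = A + B - 1" using sum by linarith
  have "A + B - 1 \<noteq> 0" using assms by simp
  moreover have "(A + B - 1) * d2 = (1 - u) * (A + B) * B"
    using u2 u_eq by (metis mult.assoc mult.commute)
  then have "(A + B - 1) * d2 = B" using sum by simp
  moreover have "(A + B - 1) * (d1 - t) = (1 - t) * (A + B)"
    using u1 u_eq by (metis mult.assoc mult.commute)
  then have "(A + B - 1) * d1 = A + B - t" by (simp add: algebra_simps)
  ultimately show ?thesis by (simp add: d_eq field_simps)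
qed

subsection \<open>The normalized quadrilateral\<close>

locale circumscribed_quad =
  fixes t A B :: real
  assumes t_pos: "0 < t" and t_less_1: "t < 1" and A_gt_1: "1 < A" and B_pos: "0 < B"
begin

text \<open>\<open>k = w - 1\<close> for the lattice width \<open>w = A + B\<close>; the vertices \<open>c\<close> and \<open>d\<close> lie
  on the line \<open>y = h\<close>, which cuts \<open>Q\<close> into the triangles \<open>acd\<close> and \<open>bcd\<close>.\<close>
definition "k = A + B - 1"
definition "h = B / k"
definition "va = (t, A)"
definition "vb = (t, -B)"
definition "vc = (-t / k, h)"
definition "vd = (1 + (1 - t) / k, h)"
definition "Q = convex hull {va, vb, vc, vd}"
definition "corner = quad_vertices va vb vc vd"

definition "Q_halfplanes = {p. (-(A - 1), t) \<bullet> p \<le> t \<and> (A - 1, 1 - t) \<bullet> p \<le> A - t \<and>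
                               (-B, -t) \<bullet> p \<le> 0 \<and> (B, t - 1) \<bullet> p \<le> B}"

text \<open>The open part of \<open>Q\<close> above height \<open>y \<ge> h\<close>, between the edges \<open>ac\<close> and \<open>ad\<close>,
  and the open part below \<open>y \<le> h\<close>, between \<open>bc\<close> and \<open>bd\<close>.\<close>
definition "upper_part y = trapezoid y A (-t / (A - 1)) (t / (A - 1)) ((A - t) / (A - 1)) ((t - 1) / (A - 1))"
definition "lower_part y = trapezoid (-B) y 0 (-t / B) 1 ((1 - t) / B)"

lemma k_pos: "k > 0" using A_gt_1 B_pos by (simp add: k_def)
lemma h_pos: "h > 0" using k_pos B_pos by (simp add: h_def)
lemma h_less_1: "h < 1" using k_pos A_gt_1 by (simp add: h_def k_def field_simps)

lemma vc_eq: "vc = (-t / k, B / k)" by (simp add: vc_def h_def)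
lemma vd_eq: "vd = ((k + 1 - t) / k, B / k)" using k_pos by (simp add: vd_def h_def field_simps)

lemma right_of_ac_iff: "(-(A - 1), t) \<bullet> p < t \<longleftrightarrow> -t / (A - 1) + t / (A - 1) * snd p < fst p"
proof -
  have "(-(A - 1), t) \<bullet> p < t \<longleftrightarrow> t * (snd p - 1) < fst p * (A - 1)"
    by (simp add: inner_prod_def algebra_simps)
  also have "\<dots> \<longleftrightarrow> t * (snd p - 1) / (A - 1) < fst p" using A_gt_1 by (simp add: pos_divide_less_eq)
  also have "t * (snd p - 1) / (A - 1) = -t / (A - 1) + t / (A - 1) * snd p"
    by (simp add: right_diff_distrib diff_divide_distrib)
  finally show ?thesis .
qed

lemma left_of_ad_iff: "(A - 1, 1 - t) \<bullet> p < A - t \<longleftrightarrow> fst p < (A - t) / (A - 1) + (t - 1) / (A - 1) * snd p"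
proof -
  have "(A - 1, 1 - t) \<bullet> p < A - t \<longleftrightarrow> fst p * (A - 1) < A - t + (t - 1) * snd p"
    by (simp add: inner_prod_def algebra_simps)
  also have "\<dots> \<longleftrightarrow> fst p < (A - t + (t - 1) * snd p) / (A - 1)"
    using A_gt_1 by (simp add: pos_less_divide_eq)
  also have "(A - t + (t - 1) * snd p) / (A - 1) = (A - t) / (A - 1) + (t - 1) / (A - 1) * snd p"
    by (simp add: add_divide_distrib)
  finally show ?thesis .
qed

lemma right_of_bc_iff: "(-B, -t) \<bullet> p < 0 \<longleftrightarrow> 0 + (-t / B) * snd p < fst p"
proof -
  have "(-B, -t) \<bullet> p < 0 \<longleftrightarrow> (-t) * snd p < fst p * B"
    by (auto simp: inner_prod_def algebra_simps)
  also have "\<dots> \<longleftrightarrow> (-t) * snd p / B < fst p" by (rule pos_divide_less_eq[OF B_pos, symmetric])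
  finally show ?thesis by simp
qed

lemma left_of_bd_iff: "(B, t - 1) \<bullet> p < B \<longleftrightarrow> fst p < 1 + (1 - t) / B * snd p"
proof -
  have "(B, t - 1) \<bullet> p < B \<longleftrightarrow> fst p * B < B + (1 - t) * snd p"
    by (simp add: inner_prod_def algebra_simps)
  also have "\<dots> \<longleftrightarrow> fst p < (B + (1 - t) * snd p) / B" using B_pos by (simp add: pos_less_divide_eq)
  also have "(B + (1 - t) * snd p) / B = 1 + (1 - t) / B * snd p" using B_pos by (simp add: field_simps)
  finally show ?thesis .
qed

lemmas edge_iffs = right_of_ac_iff left_of_ad_iff right_of_bc_iff left_of_bd_iff

lemma mem_upper_part_iff:
  "p \<in> upper_part y \<longleftrightarrow> y < snd p \<and> snd p < A \<and> (-(A - 1), t) \<bullet> p < t \<and> (A - 1, 1 - t) \<bullet> p < A - t"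
  unfolding upper_part_def trapezoid_def edge_iffs by auto

lemma mem_lower_part_iff:
  "p \<in> lower_part y \<longleftrightarrow> -B < snd p \<and> snd p < y \<and> (-B, -t) \<bullet> p < 0 \<and> (B, t - 1) \<bullet> p < B"
  unfolding lower_part_def trapezoid_def edge_iffs by auto

lemma upper_part_antimono: "y \<le> y' \<Longrightarrow> upper_part y' \<subseteq> upper_part y"
  by (auto simp: upper_part_def trapezoid_def)

lemma lower_part_mono: "y \<le> y' \<Longrightarrow> lower_part y \<subseteq> lower_part y'"
  by (auto simp: lower_part_def trapezoid_def)

lemma inner_div_k_le_iff: "(\<alpha>, \<beta>) \<bullet> (u / k, v / k) \<le> \<gamma> \<longleftrightarrow> \<alpha> * u + \<beta> * v \<le> \<gamma> * k"
proof -
  have "(\<alpha>, \<beta>) \<bullet> (u / k, v / k) = (\<alpha> * u + \<beta> * v) / k" using k_pos by (simp add: field_simps)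
  then show ?thesis using k_pos by (simp add: pos_divide_le_eq)
qed

lemma vertices_in_Q_halfplanes: "{va, vb, vc, vd} \<subseteq> Q_halfplanes"
proof -
  have AB_pos: "0 \<le> (A - 1) * (A + B)" using A_gt_1 B_pos by simp
  have "va \<in> Q_halfplanes"
  proof -
    have "0 < B * t + t * A" using t_pos A_gt_1 B_pos by (simp add: add_pos_pos)
    moreover have "(t - 1) * (A + B) \<le> 0" using t_less_1 A_gt_1 B_pos by (simp add: mult_nonpos_nonneg)
    ultimately show ?thesis by (simp add: Q_halfplanes_def va_def algebra_simps)
  qed
  moreover have "vb \<in> Q_halfplanes"
  proof -
    have "0 \<le> t * (A + B)" using t_pos A_gt_1 B_pos by simp
    moreover have "0 \<le> (1 - t) * B + A * (1 - t)" using t_less_1 A_gt_1 B_pos by simp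
    ultimately show ?thesis by (simp add: Q_halfplanes_def vb_def algebra_simps)
  qed
  moreover have "vc \<in> Q_halfplanes"
  proof -
    have "(A - t) * k - (-(A - 1) * t + (1 - t) * B) = (A - 1) * (A + B)" by (simp add: k_def algebra_simps)
    moreover have "- B \<le> B * k" using B_pos k_pos by (smt (verit) mult_pos_pos)
    moreover have "t * k = (A - 1) * t + t * B" by (simp add: k_def algebra_simps)
    ultimately show ?thesis
      unfolding Q_halfplanes_def mem_Collect_eq vc_eq inner_div_k_le_iff using AB_pos
      by (simp add: algebra_simps)
  qed
  moreover have "vd \<in> Q_halfplanes"
  proof -
    have "t * k - (-(A - 1) * (k + 1 - t) + t * B) = (A - 1) * (A + B)" by (simp add: k_def algebra_simps)
    moreover have "(A - t) * k - ((A - 1) * (k + 1 - t) + (1 - t) * B) = 0" by (simp add: k_def algebra_simps)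
    moreover have "0 \<le> B * (k + 1)" using B_pos k_pos by simp
    ultimately show ?thesis
      unfolding Q_halfplanes_def mem_Collect_eq vd_eq inner_div_k_le_iff using AB_pos
      by (simp add: algebra_simps)
  qed
  ultimately show ?thesis by blast
qed

lemma Q_subset_Q_halfplanes: "Q \<subseteq> Q_halfplanes"
proof -
  have "convex Q_halfplanes"
    unfolding Q_halfplanes_def Collect_conj_eq by (intro convex_Int convex_halfspace_le)
  then show ?thesis
    unfolding Q_def by (rule hull_minimal[OF vertices_in_Q_halfplanes])
qed

definition "Q_boundary_lines = {p. (-(A - 1), t) \<bullet> p = t} \<union> {p. (A - 1, 1 - t) \<bullet> p = A - t} \<union>
   {p. (-B, -t) \<bullet> p = 0} \<union> {p. (B, t - 1) \<bullet> p = B} \<union> {p. (0, 1) \<bullet> p = h}"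

lemma Q_boundary_lines_null: "Q_boundary_lines \<in> null_sets lebesgue"
  unfolding Q_boundary_lines_def using A_gt_1 B_pos t_pos
  by (intro null_sets.Un) (auto simp: zero_prod_def simp flip: negligible_iff_null_sets intro!: negligible_hyperplane)

lemma Q_halfplanes_subset: "Q_halfplanes \<subseteq> upper_part h \<union> lower_part h \<union> Q_boundary_lines"
proof
  fix p assume p: "p \<in> Q_halfplanes"
  show "p \<in> upper_part h \<union> lower_part h \<union> Q_boundary_lines"
  proof (cases "p \<in> Q_boundary_lines")
    case False
    then have strict: "(-(A - 1), t) \<bullet> p < t" "(A - 1, 1 - t) \<bullet> p < A - t" "(-B, -t) \<bullet> p < 0"
      "(B, t - 1) \<bullet> p < B"
      using p by (auto simp: Q_halfplanes_def Q_boundary_lines_def)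
    moreover have "snd p \<noteq> h" using False by (auto simp: Q_boundary_lines_def inner_prod_def)
    moreover have "-B < snd p" "snd p < A"
      using strict A_gt_1 B_pos by (auto simp: inner_prod_def algebra_simps)
    ultimately show ?thesis
      by (cases "h < snd p") (auto simp: mem_upper_part_iff mem_lower_part_iff)
  qed simp
qed

lemma upper_part_subset_Q: "upper_part h \<subseteq> Q"
proof
  fix p assume "p \<in> upper_part h"
  obtain x y where p_eq: "p = (x, y)" by (cases p)
  have y: "h < y" and ac: "(-(A - 1), t) \<bullet> p < t" and ad: "(A - 1, 1 - t) \<bullet> p < A - t"
    using \<open>p \<in> upper_part h\<close> by (auto simp: mem_upper_part_iff p_eq)
  define m where "m = A - 1"
  define D where "D = m * (k + 1)"
  have "D > 0" using A_gt_1 k_pos by (simp add: D_def m_def)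
  have Am: "m + 1 = A" and Bk: "k - m = B" and yB: "k * y - k + m = k * y - B"
    by (simp_all add: m_def k_def)
  define \<alpha> where "\<alpha> = (k * y - B) / D"
  define \<beta> where "\<beta> = k * (A - t + (t - 1) * y - m * x) / D"
  define \<gamma> where "\<gamma> = k * (m * x + t - t * y) / D"
  have "k * y - B > 0" using y k_pos by (simp add: h_def field_simps)
  moreover have "m * x + t - t * y > 0" using ac by (simp add: p_eq m_def algebra_simps)
  moreover have "A - t + (t - 1) * y - m * x > 0" using ad by (simp add: p_eq m_def algebra_simps)
  ultimately have nonneg: "\<alpha> \<ge> 0" "\<beta> \<ge> 0" "\<gamma> \<ge> 0"
    using \<open>D > 0\<close> k_pos by (simp_all add: \<alpha>_def \<beta>_def \<gamma>_def)
  note bary = barycentric_identities_upper[where t=t and m=m and k=k and x=x and y=y and D=D, OF _ _ D_def, unfolded Am Bk yB]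
  have "\<alpha> + \<beta> + \<gamma> = 1" and "p = \<alpha> *\<^sub>R va + \<beta> *\<^sub>R vc + \<gamma> *\<^sub>R vd"
    using bary \<open>D > 0\<close> k_pos by (simp_all add: \<alpha>_def \<beta>_def \<gamma>_def p_eq va_def vc_eq vd_eq)
  then have "p \<in> convex hull {va, vc, vd}"
    unfolding convex_hull_3 using nonneg by blast
  also have "\<dots> \<subseteq> Q" unfolding Q_def by (rule hull_mono) auto
  finally show "p \<in> Q" .
qed

lemma lower_part_subset_Q: "lower_part h \<subseteq> Q"
proof
  fix p assume "p \<in> lower_part h"
  obtain x y where p_eq: "p = (x, y)" by (cases p)
  have y: "y < h" and bc: "(-B, -t) \<bullet> p < 0" and bd: "(B, t - 1) \<bullet> p < B"
    using \<open>p \<in> lower_part h\<close> by (auto simp: mem_lower_part_iff p_eq)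
  define D where "D = B * (k + 1)"
  have "D > 0" using B_pos k_pos by (simp add: D_def)
  define \<alpha> where "\<alpha> = (B - k * y) / D"
  define \<beta> where "\<beta> = k * (B + (1 - t) * y - B * x) / D"
  define \<gamma> where "\<gamma> = k * (B * x + t * y) / D"
  have "B - k * y > 0" using y k_pos by (simp add: h_def field_simps)
  moreover have "B * x + t * y > 0" using bc by (simp add: p_eq algebra_simps)
  moreover have "B + (1 - t) * y - B * x > 0" using bd by (simp add: p_eq algebra_simps)
  ultimately have nonneg: "\<alpha> \<ge> 0" "\<beta> \<ge> 0" "\<gamma> \<ge> 0"
    using \<open>D > 0\<close> k_pos by (simp_all add: \<alpha>_def \<beta>_def \<gamma>_def)
  note bary = barycentric_identities_lower[where t=t and B=B and k=k and x=x and y=y and D=D, OF _ _ D_def]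
  have "\<alpha> + \<beta> + \<gamma> = 1" and "p = \<alpha> *\<^sub>R vb + \<beta> *\<^sub>R vc + \<gamma> *\<^sub>R vd"
    using bary \<open>D > 0\<close> k_pos by (simp_all add: \<alpha>_def \<beta>_def \<gamma>_def p_eq vb_def vc_eq vd_eq)
  then have "p \<in> convex hull {vb, vc, vd}"
    unfolding convex_hull_3 using nonneg by blast
  also have "\<dots> \<subseteq> Q" unfolding Q_def by (rule hull_mono) auto
  finally show "p \<in> Q" .
qed

lemma upper_lower_parts_subset_interior: "upper_part h \<union> lower_part h \<subseteq> interior Q"
  using upper_part_subset_Q lower_part_subset_Q
  by (intro interior_maximal) (auto simp: upper_part_def lower_part_def intro: open_trapezoid)

lemma fmeasurable_upper_part: "y \<le> A \<Longrightarrow> upper_part y \<in> fmeasurable lebesgue"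
  unfolding upper_part_def by (rule fmeasurable_trapezoid)

lemma fmeasurable_lower_part: "-B \<le> y \<Longrightarrow> lower_part y \<in> fmeasurable lebesgue"
  unfolding lower_part_def by (rule fmeasurable_trapezoid)

lemma measure_upper_part:
  assumes "y \<le> A"
  shows "measure lebesgue (upper_part y) = (A - y)\<^sup>2 / (2 * (A - 1))"
proof -
  have "measure lebesgue (upper_part y)
          = ((A - t) / (A - 1) - (-t / (A - 1))) * (A - y) + ((t - 1) / (A - 1) - t / (A - 1)) * (A\<^sup>2 - y\<^sup>2) / 2"
    unfolding upper_part_def
  proof (rule measure_trapezoid[OF assms])
    fix u assume "y \<le> u" "u \<le> A"
    then have "t * (u - 1) \<le> A - t + (t - 1) * u" by (simp add: algebra_simps)
    then have "t * (u - 1) / (A - 1) \<le> (A - t + (t - 1) * u) / (A - 1)"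
      using A_gt_1 by (intro divide_right_mono) auto
    moreover have "-t / (A - 1) + t / (A - 1) * u = t * (u - 1) / (A - 1)"
      by (simp add: right_diff_distrib diff_divide_distrib)
    moreover have "(A - t) / (A - 1) + (t - 1) / (A - 1) * u = (A - t + (t - 1) * u) / (A - 1)"
      by (simp add: add_divide_distrib)
    ultimately show "-t / (A - 1) + t / (A - 1) * u \<le> (A - t) / (A - 1) + (t - 1) / (A - 1) * u"
      by simp
  qed
  also have "\<dots> = (A - y)\<^sup>2 / (2 * (A - 1))"
  proof -
    have "((a - t) / m - (-t / m)) * (a - y) + ((t - 1) / m - t / m) * (a\<^sup>2 - y\<^sup>2) / 2 = (a - y)\<^sup>2 / (2 * m)"
      if "m \<noteq> 0" for m a
      using that by (simp add: field_simps power2_eq_square)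
    then show ?thesis using A_gt_1 by simp
  qed
  finally show ?thesis .
qed

lemma measure_lower_part:
  assumes "-B \<le> y"
  shows "measure lebesgue (lower_part y) = (y + B)\<^sup>2 / (2 * B)"
proof -
  have "measure lebesgue (lower_part y)
          = (1 - 0) * (y - (-B)) + ((1 - t) / B - (-t / B)) * (y\<^sup>2 - (-B)\<^sup>2) / 2"
    unfolding lower_part_def
  proof (rule measure_trapezoid[OF assms])
    fix u assume "-B \<le> u" "u \<le> y"
    then have "-t * u \<le> B + (1 - t) * u" by (simp add: algebra_simps)
    then show "0 + (-t / B) * u \<le> 1 + (1 - t) / B * u"
      using B_pos by (simp add: field_simps)
  qed
  also have "\<dots> = (y + B)\<^sup>2 / (2 * B)"
    using B_pos by (simp add: field_simps power2_eq_square)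
  finally show ?thesis .
qed

lemma measure_upper_lower_parts: "measure lebesgue (upper_part h \<union> lower_part h) = (k + 1)\<^sup>2 / (2 * k)"
proof -
  have "h \<le> A" "-B \<le> h" using h_pos h_less_1 A_gt_1 B_pos by simp_all
  have "upper_part h \<inter> lower_part h = {}" by (auto simp: mem_upper_part_iff mem_lower_part_iff)
  then have "measure lebesgue (upper_part h \<union> lower_part h)
               = (A - h)\<^sup>2 / (2 * (A - 1)) + (h + B)\<^sup>2 / (2 * B)"
    using \<open>h \<le> A\<close> \<open>-B \<le> h\<close>
    by (simp add: measure_Un_disjoint fmeasurable_upper_part fmeasurable_lower_part
                  measure_upper_part measure_lower_part)
  also have "\<dots> = (k + 1)\<^sup>2 / (2 * k)"
  proof -
    have upper: "A - h = (A - 1) * (k + 1) / k" and lower: "h + B = B * (k + 1) / k"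
      using k_pos by (simp_all add: h_def k_def field_simps)
    have "(A - h)\<^sup>2 / (2 * (A - 1)) + (h + B)\<^sup>2 / (2 * B)
            = (A - 1) * (k + 1)\<^sup>2 / (2 * k\<^sup>2) + B * (k + 1)\<^sup>2 / (2 * k\<^sup>2)"
      unfolding upper lower using A_gt_1 B_pos k_pos by (simp add: field_simps power2_eq_square)
    also have "\<dots> = (A - 1 + B) * ((k + 1)\<^sup>2 / (2 * k\<^sup>2))"
      by (simp only: times_divide_eq_right[symmetric] distrib_right[symmetric])
    also have "A - 1 + B = k" by (simp add: k_def)
    finally show ?thesis using k_pos by (simp add: power2_eq_square)
  qed
  finally show ?thesis .
qed

lemma Q_lmeasurable: "Q \<in> lmeasurable"
  unfolding Q_def by (intro lmeasurable_compact compact_convex_hull) auto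

text \<open>Up to the null set of boundary lines, \<open>Q\<close> is the union of the two open triangles.\<close>
lemma measure_Q: "measure lebesgue Q = (k + 1)\<^sup>2 / (2 * k)"
proof (rule antisym)
  have parts: "upper_part h \<union> lower_part h \<in> fmeasurable lebesgue"
    using h_pos h_less_1 A_gt_1 B_pos by (auto intro!: fmeasurable_upper_part fmeasurable_lower_part)
  have lines: "Q_boundary_lines \<in> fmeasurable lebesgue"
    using Q_boundary_lines_null by (auto simp: fmeasurable_def null_sets_def)
  have "measure lebesgue Q \<le> measure lebesgue (upper_part h \<union> lower_part h \<union> Q_boundary_lines)"
    using Q_subset_Q_halfplanes Q_halfplanes_subset Q_lmeasurable parts lines
    by (intro measure_mono_fmeasurable) auto
  also have "\<dots> = measure lebesgue (upper_part h \<union> lower_part h)"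
    using parts Q_boundary_lines_null by (simp add: measure_Un_null_set)
  finally show "measure lebesgue Q \<le> (k + 1)\<^sup>2 / (2 * k)"
    using measure_upper_lower_parts by simp
  show "(k + 1)\<^sup>2 / (2 * k) \<le> measure lebesgue Q"
    unfolding measure_upper_lower_parts[symmetric]
    using upper_part_subset_Q lower_part_subset_Q parts Q_lmeasurable
    by (intro measure_mono_fmeasurable) auto
qed

lemma corner_in_vertices: "corner j \<in> {va, vb, vc, vd}"
  by (auto simp: corner_def quad_vertices_def)

lemma range_corner: "range corner = {va, vb, vc, vd}"
proof
  show "range corner \<subseteq> {va, vb, vc, vd}" using corner_in_vertices by blast
  have "corner 0 = va" "corner 1 = vb" "corner 2 = vc" "corner 3 = vd"
    by (simp_all add: corner_def quad_vertices_def)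
  then show "{va, vb, vc, vd} \<subseteq> range corner" by (metis empty_subsetI insert_subset rangeI)
qed

abbreviation "good z \<equiv> strength_set Q corner z"

lemma good_subset_Q: "good z \<subseteq> Q"
  using interior_subset by (auto simp: strength_set_def)

lemma fmeasurable_good: "good z \<in> fmeasurable lebesgue"
  by (rule fmeasurableI2[OF Q_lmeasurable good_subset_Q strength_set_in_sets_lebesgue])

lemma horizontal_split_good:
  assumes f: "f \<in> interior Q" and z: "z > 1"
    and lower: "B / (z - 1) \<le> snd f" and upper: "snd f \<le> (z - A) / (z - 1)"
  shows "f \<in> good z"
proof -
  have "snd f > 0" using lower B_pos z by (smt (verit) divide_pos_pos)
  have "(z - A) / (z - 1) < 1" using z A_gt_1 by (simp add: divide_less_eq)
  then have "snd f < 1" using upper by simp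
  have B_le: "B \<le> (z - 1) * snd f" using lower z by (simp add: pos_divide_le_eq mult.commute)
  have A_le: "(z - 1) * snd f \<le> z - A" using upper z by (simp add: pos_le_divide_eq mult.commute)
  show ?thesis
  proof (rule mem_strength_set_if_slab_gauge_le[where m=0 and n=1 and c=0, OF f])
    fix j
    have "snd f \<le> z * snd f" "1 - snd f \<le> z * (1 - snd f)"
      using \<open>snd f > 0\<close> \<open>snd f < 1\<close> z by simp_all
    then have "snd v - snd f \<le> z * (1 - snd f) \<and> snd f - snd v \<le> z * snd f" if "v \<in> {va, vb, vc, vd}" for v
      using that A_le B_le A_gt_1 B_pos h_pos h_less_1 \<open>snd f > 0\<close> \<open>snd f < 1\<close>
      by (auto simp: va_def vb_def vc_def vd_def algebra_simps)
    then show "slab_gauge (of_int 0) (of_int 1) (of_int 0) f (corner j - f) \<le> z"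
      using \<open>snd f > 0\<close> \<open>snd f < 1\<close> corner_in_vertices[of j] by (intro slab_gauge_le) auto
  qed (use z \<open>snd f > 0\<close> \<open>snd f < 1\<close> in auto)
qed

definition "margin z = 1 / (k * (z - 1))"

lemma vertical_split_good:
  assumes f: "f \<in> interior Q" and z: "z > 1"
    and left: "t * margin z \<le> fst f" and right: "fst f \<le> 1 - (1 - t) * margin z"
  shows "f \<in> good z"
proof -
  have kz: "k * (z - 1) > 0" using k_pos z by simp
  have t_le: "t \<le> k * (z - 1) * fst f"
    using left kz by (simp add: margin_def pos_divide_le_eq mult.commute)
  have "(1 - t) / (k * (z - 1)) \<le> 1 - fst f" using right by (simp add: margin_def)
  then have t_ge: "1 - t \<le> (1 - fst f) * (k * (z - 1))" using kz by (simp add: pos_divide_le_eq)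
  have "fst f > 0" using t_le t_pos kz by (smt (verit) mult_nonpos_nonneg mult_pos_pos zero_less_mult_iff)
  have "fst f < 1" using t_ge t_less_1 kz by (smt (verit) mult_nonpos_nonneg)
  show ?thesis
  proof (rule mem_strength_set_if_slab_gauge_le[where m=1 and n=0 and c=0, OF f])
    fix j
    have zf: "fst f \<le> z * fst f" "1 - fst f \<le> z * (1 - fst f)"
      using \<open>fst f > 0\<close> \<open>fst f < 1\<close> z by simp_all
    have "t \<le> ((z - 1) * fst f) * k" using t_le by (simp add: algebra_simps)
    then have "t / k \<le> (z - 1) * fst f" by (simp add: pos_divide_le_eq[OF k_pos])
    moreover have "1 - t \<le> ((z - 1) - (z - 1) * fst f) * k" using t_ge by (simp add: algebra_simps)
    then have "(1 - t) / k \<le> (z - 1) - (z - 1) * fst f" by (simp add: pos_divide_le_eq[OF k_pos])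
    moreover have "t / k > 0" "(1 - t) / k > 0" using t_pos t_less_1 k_pos by simp_all
    ultimately have "fst v - fst f \<le> z * (1 - fst f) \<and> fst f - fst v \<le> z * fst f" if "v \<in> {va, vb, vc, vd}" for v
      using that zf t_pos t_less_1 \<open>fst f > 0\<close> \<open>fst f < 1\<close>
      by (auto simp: va_def vb_def vc_def vd_def algebra_simps)
    then show "slab_gauge (of_int 1) (of_int 0) (of_int 0) f (corner j - f) \<le> z"
      using \<open>fst f > 0\<close> \<open>fst f < 1\<close> corner_in_vertices[of j] by (intro slab_gauge_le) auto
  qed (use z \<open>fst f > 0\<close> \<open>fst f < 1\<close> in auto)
qed

definition "band z = (upper_part h \<union> lower_part h) \<inter> {p. B / (z - 1) < snd p \<and> snd p < (z - A) / (z - 1)}"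

lemma band_subset_good: "z > 1 \<Longrightarrow> band z \<subseteq> good z"
  using upper_lower_parts_subset_interior by (auto simp: band_def intro!: horizontal_split_good)

lemma fmeasurable_band: "band z \<in> fmeasurable lebesgue"
proof -
  have "open (band z)" unfolding band_def upper_part_def lower_part_def
    by (intro open_Int open_Un open_trapezoid open_Collect_conj open_Collect_less continuous_intros)
  then have "band z \<in> sets lebesgue" by (intro sets_completionI_sets) (auto intro: borel_open)
  moreover have "band z \<subseteq> Q" using upper_part_subset_Q lower_part_subset_Q by (auto simp: band_def)
  ultimately show ?thesis using fmeasurableI2[OF Q_lmeasurable] by blast
qed

lemma band_in_strip:
  assumes "z > 1" and "p \<in> band z"
  shows "0 < snd p \<and> snd p < 1"
proof -
  have "B / (z - 1) < snd p" "snd p < (z - A) / (z - 1)" using assms(2) by (auto simp: band_def)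
  moreover have "B / (z - 1) > 0" using B_pos assms(1) by simp
  moreover have "(z - A) / (z - 1) < 1" using assms(1) A_gt_1 by (simp add: divide_less_eq)
  ultimately show ?thesis by linarith
qed

text \<open>For \<open>z \<ge> w\<close> the band is cut out of \<open>Q\<close> by two horizontal lines on either side of \<open>cd\<close>;
  what lies outside are two triangles similar to \<open>bcd\<close> and \<open>acd\<close>.\<close>
lemma measure_band:
  assumes z: "z > k + 1"
  shows "measure lebesgue (band z) \<ge> (k + 1)\<^sup>2 / (2 * k) - k * z\<^sup>2 / (2 * (z - 1)\<^sup>2)"
proof -
  define y0 where "y0 = B / (z - 1)"
  define y1 where "y1 = (z - A) / (z - 1)"
  have "z > 1" using z k_pos by simp
  have "y0 \<le> h"
    using z k_pos B_pos by (simp add: y0_def h_def frac_le)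
  have "k * (z - A) - B * (z - 1) = (A - 1) * (z - (k + 1))" by (simp add: k_def algebra_simps)
  then have "B * (z - 1) \<le> k * (z - A)" using z A_gt_1 by (smt (verit) mult_nonneg_nonneg)
  then have "h \<le> y1" using k_pos \<open>z > 1\<close> by (simp add: h_def y1_def frac_le_eq field_simps)
  have "-B \<le> y0" using B_pos \<open>z > 1\<close> by (smt (verit) y0_def divide_pos_pos)
  have "y1 \<le> A"
  proof -
    have "z - A \<le> A * (z - 1)" using A_gt_1 \<open>z > 1\<close> by (simp add: algebra_simps)
    then show ?thesis using \<open>z > 1\<close> by (simp add: y1_def pos_divide_le_eq)
  qed
  let ?lines = "{p :: real \<times> real. snd p = y0} \<union> {p. snd p = y1}"
  have cover: "upper_part h \<union> lower_part h \<subseteq> band z \<union> lower_part y0 \<union> upper_part y1 \<union> ?lines"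
    using \<open>y0 \<le> h\<close> \<open>h \<le> y1\<close>
    by (auto simp: band_def mem_upper_part_iff mem_lower_part_iff y0_def[symmetric] y1_def[symmetric])
  have pieces: "band z \<union> lower_part y0 \<union> upper_part y1 \<in> fmeasurable lebesgue"
    using fmeasurable_band fmeasurable_lower_part[OF \<open>-B \<le> y0\<close>] fmeasurable_upper_part[OF \<open>y1 \<le> A\<close>]
    by auto
  have lines: "?lines \<in> null_sets lebesgue" using horizontal_line_null by auto
  then have lines_fm: "?lines \<in> fmeasurable lebesgue" by (auto simp: fmeasurable_def null_sets_def)
  have parts: "upper_part h \<union> lower_part h \<in> fmeasurable lebesgue"
    using h_pos h_less_1 A_gt_1 B_pos by (auto intro!: fmeasurable_upper_part fmeasurable_lower_part)
  have "(k + 1)\<^sup>2 / (2 * k) \<le> measure lebesgue (band z \<union> lower_part y0 \<union> upper_part y1 \<union> ?lines)"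
    unfolding measure_upper_lower_parts[symmetric]
    by (rule measure_mono_fmeasurable[OF cover])
       (use parts pieces lines_fm in auto)
  also have "\<dots> = measure lebesgue (band z \<union> lower_part y0 \<union> upper_part y1)"
    using pieces lines by (simp add: measure_Un_null_set)
  also have "\<dots> \<le> measure lebesgue (band z) + measure lebesgue (lower_part y0) + measure lebesgue (upper_part y1)"
    using fmeasurable_band fmeasurable_lower_part[OF \<open>-B \<le> y0\<close>] fmeasurable_upper_part[OF \<open>y1 \<le> A\<close>]
    by (smt (verit) fmeasurableD fmeasurable.Un measure_Un_le)
  finally have "(k + 1)\<^sup>2 / (2 * k) \<le> measure lebesgue (band z) +
                  (measure lebesgue (lower_part y0) + measure lebesgue (upper_part y1))"
    by simp
  moreover have "measure lebesgue (lower_part y0) + measure lebesgue (upper_part y1) = k * z\<^sup>2 / (2 * (z - 1)\<^sup>2)"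
  proof -
    have sq: "(b * z / c)\<^sup>2 / (2 * b) = b * z\<^sup>2 / (2 * c\<^sup>2)" if "b \<noteq> 0" "c \<noteq> 0" for b c
      using that by (simp add: field_simps power2_eq_square)
    have "y0 + B = B * z / (z - 1)" "A - y1 = (A - 1) * z / (z - 1)"
      using \<open>z > 1\<close> by (simp_all add: y0_def y1_def field_simps)
    then have "measure lebesgue (lower_part y0) + measure lebesgue (upper_part y1)
                 = B * z\<^sup>2 / (2 * (z - 1)\<^sup>2) + (A - 1) * z\<^sup>2 / (2 * (z - 1)\<^sup>2)"
      using measure_lower_part[OF \<open>-B \<le> y0\<close>] measure_upper_part[OF \<open>y1 \<le> A\<close>]
        sq[of B "z - 1"] sq[of "A - 1" "z - 1"] B_pos A_gt_1 \<open>z > 1\<close> by simp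
    also have "\<dots> = (B + (A - 1)) * (z\<^sup>2 / (2 * (z - 1)\<^sup>2))"
      by (simp only: times_divide_eq_right[symmetric] distrib_right[symmetric])
    finally show ?thesis by (simp add: k_def add.commute)
  qed
  ultimately show ?thesis by simp
qed

definition "upper_rect z = trapezoid 1 (1 + margin z * (A - 1)) (t * margin z) 0 (1 - (1 - t) * margin z) 0"
definition "lower_rect z = trapezoid (-(margin z * B)) 0 (t * margin z) 0 (1 - (1 - t) * margin z) 0"

text \<open>The parts of \<open>Q\<close> outside the strip \<open>0 < y < 1\<close> where the vertical split works.\<close>
definition "vertical_pieces z =
   upper_rect z \<union> upper_part (1 + margin z * (A - 1)) \<union> lower_rect z \<union> lower_part (-(margin z * B))"

context
  fixes z assumes z_gt_1: "z > 1" and margin_less_1: "margin z < 1"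
begin

lemma margin_pos: "margin z > 0" using k_pos z_gt_1 by (simp add: margin_def)

lemma upper_rect_subset_good: "upper_rect z \<subseteq> good z"
proof
  fix p assume p: "p \<in> upper_rect z"
  obtain x y where p_eq: "p = (x, y)" by (cases p)
  have y: "1 < y" "y < 1 + margin z * (A - 1)" and x: "t * margin z < x" "x < 1 - (1 - t) * margin z"
    using p by (auto simp: upper_rect_def trapezoid_def p_eq)
  have "t * (y - 1) < t * (margin z * (A - 1))" using y t_pos by simp
  also have "\<dots> = (A - 1) * (t * margin z)" by simp
  also have "\<dots> < (A - 1) * x" using x(1) A_gt_1 by simp
  finally have ac: "(-(A - 1), t) \<bullet> p < t" by (simp add: p_eq algebra_simps)
  have "(1 - t) * (y - 1) < (1 - t) * (margin z * (A - 1))" using y t_less_1 by simp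
  also have "\<dots> = (A - 1) * ((1 - t) * margin z)" by simp
  also have "\<dots> < (A - 1) * (1 - x)" using x(2) A_gt_1 by simp
  finally have ad: "(A - 1, 1 - t) \<bullet> p < A - t" by (simp add: p_eq algebra_simps)
  have "margin z * (A - 1) < A - 1" using margin_less_1 A_gt_1 by simp
  then have "p \<in> upper_part h" using y h_less_1 ac ad by (simp add: mem_upper_part_iff p_eq)
  then have "p \<in> interior Q" using upper_lower_parts_subset_interior by blast
  then show "p \<in> good z" using x z_gt_1 by (intro vertical_split_good) (auto simp: p_eq)
qed

lemma upper_tip_subset_good: "upper_part (1 + margin z * (A - 1)) \<subseteq> good z"
proof
  fix p assume p: "p \<in> upper_part (1 + margin z * (A - 1))"
  obtain x y where p_eq: "p = (x, y)" by (cases p)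
  have y: "1 + margin z * (A - 1) < y" and ac: "(-(A - 1), t) \<bullet> p < t" and ad: "(A - 1, 1 - t) \<bullet> p < A - t"
    using p by (auto simp: mem_upper_part_iff p_eq)
  have "(A - 1) * x > t * (y - 1)" using ac by (simp add: p_eq algebra_simps)
  moreover have "t * (y - 1) > t * (margin z * (A - 1))" using y t_pos by simp
  ultimately have "(A - 1) * x > (A - 1) * (t * margin z)" by (simp add: algebra_simps)
  then have left: "t * margin z < x" using A_gt_1 by simp
  have "(A - 1) * (1 - x) > (1 - t) * (y - 1)" using ad by (simp add: p_eq algebra_simps)
  moreover have "(1 - t) * (y - 1) > (1 - t) * (margin z * (A - 1))" using y t_less_1 by simp
  ultimately have "(A - 1) * (1 - x) > (A - 1) * ((1 - t) * margin z)" by (simp add: algebra_simps)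
  then have right: "x < 1 - (1 - t) * margin z" using A_gt_1 by simp
  have "h \<le> 1 + margin z * (A - 1)" using h_less_1 margin_pos A_gt_1 by (smt (verit) mult_pos_pos)
  then have "p \<in> upper_part h" using p upper_part_antimono by blast
  then have "p \<in> interior Q" using upper_lower_parts_subset_interior by blast
  then show "p \<in> good z" using left right z_gt_1 by (intro vertical_split_good) (auto simp: p_eq)
qed

lemma lower_rect_subset_good: "lower_rect z \<subseteq> good z"
proof
  fix p assume p: "p \<in> lower_rect z"
  obtain x y where p_eq: "p = (x, y)" by (cases p)
  have y: "-(margin z * B) < y" "y < 0" and x: "t * margin z < x" "x < 1 - (1 - t) * margin z"
    using p by (auto simp: lower_rect_def trapezoid_def p_eq)
  have "-y < margin z * B" using y by simp
  then have "t * (-y) < t * (margin z * B)" using t_pos by (rule mult_strict_left_mono)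
  also have "\<dots> = B * (t * margin z)" by simp
  also have "\<dots> < B * x" using x(1) B_pos by simp
  finally have bc: "(-B, -t) \<bullet> p < 0" by (simp add: p_eq algebra_simps)
  have "(1 - t) * (-y) < (1 - t) * (margin z * B)"
    using \<open>-y < margin z * B\<close> t_less_1 by (intro mult_strict_left_mono) auto
  also have "\<dots> = B * ((1 - t) * margin z)" by simp
  also have "\<dots> < B * (1 - x)" using x(2) B_pos by simp
  finally have bd: "(B, t - 1) \<bullet> p < B" by (simp add: p_eq algebra_simps)
  have "margin z * B < B" using margin_less_1 B_pos by simp
  then have "p \<in> lower_part h" using y h_pos bc bd by (simp add: mem_lower_part_iff p_eq)
  then have "p \<in> interior Q" using upper_lower_parts_subset_interior by blast
  then show "p \<in> good z" using x z_gt_1 by (intro vertical_split_good) (auto simp: p_eq)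
qed

lemma lower_tip_subset_good: "lower_part (-(margin z * B)) \<subseteq> good z"
proof
  fix p assume p: "p \<in> lower_part (-(margin z * B))"
  obtain x y where p_eq: "p = (x, y)" by (cases p)
  have y: "y < -(margin z * B)" and bc: "(-B, -t) \<bullet> p < 0" and bd: "(B, t - 1) \<bullet> p < B"
    using p by (auto simp: mem_lower_part_iff p_eq)
  have "B * x > t * (-y)" using bc by (simp add: p_eq algebra_simps)
  moreover have "t * (-y) > t * (margin z * B)"
    using y t_pos by (intro mult_strict_left_mono) auto
  ultimately have "B * x > B * (t * margin z)" by (simp add: algebra_simps)
  then have left: "t * margin z < x" using B_pos by simp
  have "B * (1 - x) > (1 - t) * (-y)" using bd by (simp add: p_eq algebra_simps)
  moreover have "(1 - t) * (-y) > (1 - t) * (margin z * B)"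
    using y t_less_1 by (intro mult_strict_left_mono) auto
  ultimately have "B * (1 - x) > B * ((1 - t) * margin z)" by (simp add: algebra_simps)
  then have right: "x < 1 - (1 - t) * margin z" using B_pos by simp
  have "-(margin z * B) \<le> h" using h_pos margin_pos B_pos by (smt (verit) mult_pos_pos)
  then have "p \<in> lower_part h" using p lower_part_mono by blast
  then have "p \<in> interior Q" using upper_lower_parts_subset_interior by blast
  then show "p \<in> good z" using left right z_gt_1 by (intro vertical_split_good) (auto simp: p_eq)
qed

lemma vertical_pieces_subset_good: "vertical_pieces z \<subseteq> good z"
  unfolding vertical_pieces_def
  using upper_rect_subset_good upper_tip_subset_good lower_rect_subset_good lower_tip_subset_good
  by blast

lemma vertical_pieces_outside_strip: "p \<in> vertical_pieces z \<Longrightarrow> snd p < 0 \<or> 1 < snd p"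
  using mult_pos_pos[OF margin_pos, of "A - 1"] mult_pos_pos[OF margin_pos B_pos] A_gt_1
  by (auto simp: vertical_pieces_def upper_rect_def lower_rect_def mem_upper_part_iff mem_lower_part_iff
                 trapezoid_def)

lemma measure_vertical_pieces:
  "vertical_pieces z \<in> fmeasurable lebesgue \<and>
   measure lebesgue (vertical_pieces z) = k * (1 - (margin z)\<^sup>2) / 2"
proof -
  let ?m = "margin z"
  have "?m * (A - 1) \<le> 1 * (A - 1)" using margin_less_1 A_gt_1 by (intro mult_right_mono) auto
  then have tip_bounds: "1 + ?m * (A - 1) \<le> A" "-B \<le> -(?m * B)"
    using margin_less_1 B_pos by simp_all
  have width: "t * ?m + 0 * y \<le> 1 - (1 - t) * ?m + 0 * y" for y
    using margin_less_1 by (simp add: algebra_simps)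
  have rect_heights: "1 \<le> 1 + ?m * (A - 1)" "-(?m * B) \<le> 0" using margin_pos A_gt_1 B_pos by simp_all
  have fm: "upper_rect z \<in> fmeasurable lebesgue" "lower_rect z \<in> fmeasurable lebesgue"
    "upper_part (1 + ?m * (A - 1)) \<in> fmeasurable lebesgue" "lower_part (-(?m * B)) \<in> fmeasurable lebesgue"
    using rect_heights tip_bounds
    by (auto simp: upper_rect_def lower_rect_def
             intro!: fmeasurable_trapezoid fmeasurable_upper_part fmeasurable_lower_part)
  have "measure lebesgue (upper_rect z)
          = (1 - (1 - t) * ?m - t * ?m) * (1 + ?m * (A - 1) - 1) + (0 - 0) * ((1 + ?m * (A - 1))\<^sup>2 - 1\<^sup>2) / 2"
    unfolding upper_rect_def by (rule measure_trapezoid[OF rect_heights(1) width])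
  moreover have "measure lebesgue (lower_rect z)
          = (1 - (1 - t) * ?m - t * ?m) * (0 - (-(?m * B))) + (0 - 0) * (0\<^sup>2 - (-(?m * B))\<^sup>2) / 2"
    unfolding lower_rect_def by (rule measure_trapezoid[OF rect_heights(2) width])
  ultimately have rects: "measure lebesgue (upper_rect z) = (1 - ?m) * (?m * (A - 1))"
    "measure lebesgue (lower_rect z) = (1 - ?m) * (?m * B)"
    by (simp_all add: algebra_simps)
  have sq: "(a * (1 - ?m))\<^sup>2 / (2 * a) = a * (1 - ?m)\<^sup>2 / 2" if "a \<noteq> 0" for a
    using that by (simp add: field_simps power2_eq_square)
  have "A - (1 + ?m * (A - 1)) = (A - 1) * (1 - ?m)" "-(?m * B) + B = B * (1 - ?m)"
    by (simp_all add: algebra_simps)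
  then have tips: "measure lebesgue (upper_part (1 + ?m * (A - 1))) = (A - 1) * (1 - ?m)\<^sup>2 / 2"
    "measure lebesgue (lower_part (-(?m * B))) = B * (1 - ?m)\<^sup>2 / 2"
    using measure_upper_part[OF tip_bounds(1)] measure_lower_part[OF tip_bounds(2)]
      sq[of "A - 1"] sq[of B] A_gt_1 B_pos by simp_all
  have disj: "upper_rect z \<inter> upper_part (1 + ?m * (A - 1)) = {}"
    "(upper_rect z \<union> upper_part (1 + ?m * (A - 1))) \<inter> lower_rect z = {}"
    "(upper_rect z \<union> upper_part (1 + ?m * (A - 1)) \<union> lower_rect z) \<inter> lower_part (-(?m * B)) = {}"
    using mult_pos_pos[OF margin_pos, of "A - 1"] mult_pos_pos[OF margin_pos B_pos] A_gt_1
    by (auto simp: upper_rect_def lower_rect_def mem_upper_part_iff mem_lower_part_iff trapezoid_def)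
  have "measure lebesgue (vertical_pieces z)
          = (1 - ?m) * (?m * (A - 1)) + (A - 1) * (1 - ?m)\<^sup>2 / 2 + (1 - ?m) * (?m * B) + B * (1 - ?m)\<^sup>2 / 2"
  proof -
    have "measure lebesgue (upper_rect z \<union> upper_part (1 + ?m * (A - 1)))
            = measure lebesgue (upper_rect z) + measure lebesgue (upper_part (1 + ?m * (A - 1)))"
      by (rule measure_Un_disjoint[OF fm(1) fm(3) disj(1)])
    moreover have "measure lebesgue (upper_rect z \<union> upper_part (1 + ?m * (A - 1)) \<union> lower_rect z)
            = measure lebesgue (upper_rect z \<union> upper_part (1 + ?m * (A - 1))) + measure lebesgue (lower_rect z)"
      by (rule measure_Un_disjoint[OF _ fm(2) disj(2)]) (use fm in auto)
    moreover have "measure lebesgue (vertical_pieces z)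
            = measure lebesgue (upper_rect z \<union> upper_part (1 + ?m * (A - 1)) \<union> lower_rect z)
              + measure lebesgue (lower_part (-(?m * B)))"
      unfolding vertical_pieces_def by (rule measure_Un_disjoint[OF _ fm(4) disj(3)]) (use fm in auto)
    ultimately show ?thesis by (simp add: rects tips)
  qed
  also have "\<dots> = (A - 1 + B) * (1 - ?m\<^sup>2) / 2" by (simp add: field_simps power2_eq_square)
  moreover have "vertical_pieces z \<in> fmeasurable lebesgue"
    unfolding vertical_pieces_def using fm by (intro fmeasurable.Un)
  ultimately show ?thesis by (simp add: k_def)
qed

end

lemma cor1_bound_le_good_ratio:
  assumes z: "z > 1"
  shows "cor1_bound (k + 1) z \<le> measure lebesgue (good z) / measure lebesgue Q"
proof -
  define area where "area = (k + 1)\<^sup>2 / (2 * k)"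
  have "area > 0" using k_pos by (simp add: area_def)
  have "z - 1 > 0" using z by simp
  have good_mono: "S \<subseteq> good z \<Longrightarrow> S \<in> sets lebesgue \<Longrightarrow> measure lebesgue S \<le> measure lebesgue (good z)" for S
    by (rule measure_mono_fmeasurable[OF _ _ fmeasurable_good])
  consider "z \<le> k + 1" | "k + 1 < z" "z \<le> (k + 1) / k" | "k + 1 < z" "(k + 1) / k < z" by linarith
  then show ?thesis
  proof cases
    case 1
    then show ?thesis
      using k_pos by (simp add: cor1_bound_def)
  next
    case 2
    have "cor1_bound (k + 1) z = (area - k * z\<^sup>2 / (2 * (z - 1)\<^sup>2)) / area"
      using 2 cor1_bound_middle_eq[OF k_pos \<open>z - 1 > 0\<close> refl] by (simp add: cor1_bound_def area_def)
    also have "\<dots> \<le> measure lebesgue (good z) / area"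
      using measure_band[OF 2(1)] good_mono[OF band_subset_good[OF z]] fmeasurable_band \<open>area > 0\<close>
      unfolding area_def by (intro divide_right_mono) auto
    finally show ?thesis by (simp add: measure_Q area_def)
  next
    case 3
    have "k * (z - 1) > 1" using 3(2) k_pos by (simp add: field_simps)
    then have margin: "margin z < 1" by (simp add: margin_def)
    have disj: "band z \<inter> vertical_pieces z = {}"
      using band_in_strip[OF z] vertical_pieces_outside_strip[OF z margin] by fastforce
    have "cor1_bound (k + 1) z = (area - k * z\<^sup>2 / (2 * (z - 1)\<^sup>2) + k * (1 - (margin z)\<^sup>2) / 2) / area"
      using 3 k_pos cor1_bound_last_eq[OF k_pos \<open>z - 1 > 0\<close> refl]
      by (simp add: cor1_bound_def area_def margin_def not_le)
    also have "\<dots> \<le> measure lebesgue (band z \<union> vertical_pieces z) / area"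
    proof (rule divide_right_mono)
      have "area - k * z\<^sup>2 / (2 * (z - 1)\<^sup>2) + k * (1 - (margin z)\<^sup>2) / 2
              \<le> measure lebesgue (band z) + measure lebesgue (vertical_pieces z)"
        using measure_band[OF 3(1)] measure_vertical_pieces[OF z margin] by (simp add: area_def)
      also have "\<dots> = measure lebesgue (band z \<union> vertical_pieces z)"
        using measure_vertical_pieces[OF z margin]
        by (simp add: measure_Un_disjoint[OF fmeasurable_band _ disj])
      finally show "area - k * z\<^sup>2 / (2 * (z - 1)\<^sup>2) + k * (1 - (margin z)\<^sup>2) / 2
              \<le> measure lebesgue (band z \<union> vertical_pieces z)" .
    qed (use \<open>area > 0\<close> in simp)
    also have "\<dots> \<le> measure lebesgue (good z) / area"
      using band_subset_good[OF z] vertical_pieces_subset_good[OF z margin] fmeasurable_band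
        measure_vertical_pieces[OF z margin] \<open>area > 0\<close>
      by (intro divide_right_mono good_mono) auto
    finally show ?thesis by (simp add: measure_Q area_def)
  qed
qed

end

lemma PQ_bounds_if_cor1_hyp:
  assumes hyp: "cor1_hyp a b c d" and z: "1 < z"
  defines "w \<equiv> lattice_width (convex hull {a, b, c, d})"
  shows "cor1_bound w z \<le> PQ (quad_vertices a b c d) z \<and> PQ (quad_vertices a b c d) z \<le> 1 \<and> 1 < w"
proof -
  have extreme: "{x. x extreme_point_of convex hull {a, b, c, d}} = {a, b, c, d}"
    and segments: "(0, 0) \<in> open_segment b c" "(1, 0) \<in> open_segment b d"
      "(0, 1) \<in> open_segment a c" "(1, 1) \<in> open_segment a d"
    and coords: "0 < fst a" "fst b < 1" "1 < snd a" "snd b < 0" "fst a = fst b"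
    and width: "w = snd a - snd b"
    using hyp unfolding cor1_hyp_def Let_def w_def by auto
  define t A B where "t = fst a" and "A = snd a" and "B = - snd b"
  interpret circumscribed_quad t A B
    using coords by unfold_locales (auto simp: t_def A_def B_def)
  have a_pair: "a = (t, A)" by (simp add: t_def A_def)
  have b_pair: "b = (t, -B)" using coords(5) by (simp add: t_def B_def prod_eq_iff)
  have c_eq: "c = vc"
    using vertex_c_eq[of t A B c] segments t_pos A_gt_1 B_pos by (simp add: a_pair b_pair vc_eq k_def)
  have d_eq: "d = vd"
    using vertex_d_eq[of t A B d] segments t_less_1 A_gt_1 B_pos by (simp add: a_pair b_pair vd_eq k_def)
  have a_eq: "a = va" and b_eq: "b = vb" by (simp_all add: a_pair b_pair va_def vb_def)
  have hull_eq: "convex hull {a, b, c, d} = Q" and vertices_eq: "quad_vertices a b c d = corner"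
    by (simp_all only: Q_def corner_def a_eq b_eq c_eq d_eq)
  have w_eq: "w = k + 1" using width unfolding k_def by (simp add: A_def B_def)
  have "convex hull (range corner) = Q" by (simp add: range_corner Q_def)
  moreover have "corner j extreme_point_of Q" for j
    using extreme corner_in_vertices[of j] unfolding hull_eq a_eq b_eq c_eq d_eq Q_def by blast
  ultimately have PQ_eq: "PQ (quad_vertices a b c d) z = measure lebesgue (good z) / measure lebesgue Q"
    using PQ_eq_measure_ratio[of corner z] z vertices_eq by simp
  have "measure lebesgue (good z) \<le> measure lebesgue Q"
    by (rule measure_mono_fmeasurable[OF good_subset_Q _ Q_lmeasurable]) (use fmeasurable_good in auto)
  moreover have "measure lebesgue Q > 0" using k_pos by (simp add: measure_Q)
  ultimately show ?thesis
    using cor1_bound_le_good_ratio[OF z] k_pos by (simp add: PQ_eq w_eq)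
qed

lemma cor1_bound_close_to_1:
  fixes z \<epsilon> :: real
  assumes z: "z > 1" and \<epsilon>: "\<epsilon> > 0"
  shows "\<exists>\<delta>>0. \<forall>w. 1 < w \<and> w < 1 + \<delta> \<longrightarrow> 1 - \<epsilon> < cor1_bound w z"
proof -
  define q where "q = z\<^sup>2 / (z - 1)\<^sup>2"
  have "q > 0" using z by (simp add: q_def)
  define \<delta> where "\<delta> = min (min (z - 1) (1 / (z - 1))) (min 1 (\<epsilon> / (2 * q)))"
  have "\<delta> > 0" using z \<epsilon> \<open>q > 0\<close> by (simp add: \<delta>_def)
  show ?thesis
  proof (intro exI[of _ \<delta>] conjI allI impI \<open>\<delta> > 0\<close>)
    fix w assume w: "1 < w \<and> w < 1 + \<delta>"
    define e where "e = w - 1"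
    have "e > 0" "e < \<delta>" using w by (auto simp: e_def)
    have "\<not> z \<le> w" using \<open>e < \<delta>\<close> by (simp add: \<delta>_def e_def)
    have "e < 1 / (z - 1)" using \<open>e < \<delta>\<close> by (simp add: \<delta>_def)
    then have "e * (z - 1) < 1" using z by (simp add: field_simps)
    then have "z \<le> w / (w - 1)" using \<open>e > 0\<close> by (simp add: e_def field_simps)
    \<comment> \<open>in the middle branch, \<open>1 - cor1_bound w z = (z (w - 1) / (w (z - 1)))\<^sup>2\<close>\<close>
    have "cor1_bound w z = (z - w) * (2 * w * z - w - z) / (w\<^sup>2 * (z - 1)\<^sup>2)"
      using \<open>\<not> z \<le> w\<close> \<open>z \<le> w / (w - 1)\<close> by (simp add: cor1_bound_def)
    also have "(z - w) * (2 * w * z - w - z) = w\<^sup>2 * (z - 1)\<^sup>2 - z\<^sup>2 * e\<^sup>2"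
      by (simp add: e_def power2_eq_square algebra_simps)
    also have "(w\<^sup>2 * (z - 1)\<^sup>2 - z\<^sup>2 * e\<^sup>2) / (w\<^sup>2 * (z - 1)\<^sup>2) = 1 - q * e\<^sup>2 / w\<^sup>2"
      using w z by (simp add: q_def field_simps)
    finally have bound_eq: "cor1_bound w z = 1 - q * e\<^sup>2 / w\<^sup>2" .
    have "1 \<le> w\<^sup>2" using w by (simp add: one_le_power)
    then have "q * e\<^sup>2 / w\<^sup>2 \<le> q * e\<^sup>2 / 1"
      using \<open>q > 0\<close> by (intro divide_left_mono) auto
    also have "\<dots> \<le> q * e"
      using \<open>e > 0\<close> \<open>e < \<delta>\<close> \<open>q > 0\<close> by (simp add: \<delta>_def power2_eq_square mult_le_cancel_left1)
    also have "q * e < q * (\<epsilon> / (2 * q))"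
      using \<open>e < \<delta>\<close> \<open>q > 0\<close> by (intro mult_strict_left_mono) (auto simp: \<delta>_def)
    also have "\<dots> = \<epsilon> / 2" using \<open>q > 0\<close> by simp
    finally show "1 - \<epsilon> < cor1_bound w z" using bound_eq \<epsilon> by linarith
  qed
qed

theorem corollary1:
  shows "(\<forall>a b c d z. cor1_hyp a b c d \<and> 1 < z \<longrightarrow>
            cor1_bound (lattice_width (convex hull {a, b, c, d})) z \<le> PQ (quad_vertices a b c d) z) \<and>
         (\<forall>z > 1. \<forall>\<epsilon> > 0. \<exists>\<delta> > 0. \<forall>a b c d.
            cor1_hyp a b c d \<and> lattice_width (convex hull {a, b, c, d}) < 1 + \<delta> \<longrightarrow>
            \<bar>PQ (quad_vertices a b c d) z - 1\<bar> < \<epsilon>)"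
proof (intro conjI allI impI)
  fix a b c d and z :: real
  assume "cor1_hyp a b c d \<and> 1 < z"
  then show "cor1_bound (lattice_width (convex hull {a, b, c, d})) z \<le> PQ (quad_vertices a b c d) z"
    using PQ_bounds_if_cor1_hyp by blast
next
  fix z \<epsilon> :: real
  assume "z > 1" "\<epsilon> > 0"
  then obtain \<delta> where "\<delta> > 0" and close: "\<And>w. 1 < w \<and> w < 1 + \<delta> \<Longrightarrow> 1 - \<epsilon> < cor1_bound w z"
    using cor1_bound_close_to_1 by blast
  show "\<exists>\<delta>>0. \<forall>a b c d. cor1_hyp a b c d \<and> lattice_width (convex hull {a, b, c, d}) < 1 + \<delta> \<longrightarrow>
          \<bar>PQ (quad_vertices a b c d) z - 1\<bar> < \<epsilon>"
  proof (intro exI[of _ \<delta>] conjI allI impI \<open>\<delta> > 0\<close>)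
    fix a b c d
    assume "cor1_hyp a b c d \<and> lattice_width (convex hull {a, b, c, d}) < 1 + \<delta>"
    then show "\<bar>PQ (quad_vertices a b c d) z - 1\<bar> < \<epsilon>"
      using PQ_bounds_if_cor1_hyp[OF _ \<open>z > 1\<close>, of a b c d] close by fastforce
  qed
qed

end
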